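(* For estimating $H_S(\underline\theta)$ under squared error loss: (a) the estimators $\delta_c$ with $c\in(-\infty,c_1(\alpha))\cup(\psi(2\alpha)-\ln2,\infty)$ are inadmissible. For $c<c_1(\alpha)$, $\delta_c$ is dominated by $\delta_{c_1(\alpha)}(X_1,X_2)=\ln Z_2-\psi(\alpha)$; for $c\in(\psi(2\alpha)-\ln2,\,c_2(\alpha))$, $\delta_c$ is dominated by the shrinkage estimator $\delta^{(S)}_c$; for $c\ge c_2(\alpha)$, $\delta_c$ is dominated by $\delta^{(S)}_{c_2(\alpha)}$. (b) $\delta_{\ln\alpha}(X_1,X_2)=\ln Z_2-\ln\alpha$ is inadmissible and is dominated by $\delta^{(S)}_{\ln\alpha}$. (c) $\delta_{\ln(\alpha+1)}(X_1,X_2)=\ln Z_2-\ln(\alpha+1)$ is inadmissible and is dominated by $\delta^{(S)}_{\ln(\alpha+1)}$. Here, for $c\in\mathbb R$, $$\delta^{(S)}_c(X_1,X_2)=\begin{cases}\ln Z_2-c, & \text{if } Z_1/Z_2<e^{\psi(2\alpha)-c}-1,\\ \ln(X_1+X_2)-\psi(2\alpha), & \text{if } Z_1/Z_2\ge e^{\psi(2\alpha)-c}-1.\end{cases}$$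
   Context: Fix a known $\alpha>0$. $X_1,X_2$ are independent, $X_i$ having density $f(x\mid\theta_i)=\frac{x^{\alpha-1}e^{-x/\theta_i}}{\Gamma(\alpha)\theta_i^{\alpha}}$, $x>0$, with unknown $\underline\theta=(\theta_1,\theta_2)\in\Theta=(0,\infty)^2$. $Z_1=\min\{X_1,X_2\}$, $Z_2=\max\{X_1,X_2\}$. $H_S(\underline\theta)=\ln\theta_1\, I(X_1\ge X_2)+\ln\theta_2\, I(X_1<X_2)$. $\psi$ is the digamma function; $G_\alpha,g_\alpha$ are the distribution function and density of the gamma distribution with shape $\alpha$, scale $1$; $c_1(\alpha)=\psi(\alpha)$, $c_2(\alpha)=2\int_0^\infty\ln(z)G_\alpha(z)g_\alpha(z)\,dz$. For $c\in\mathbb R$, $\delta_c(X_1,X_2)=\ln Z_2-c$. Risk: $R(\underline\theta,\delta)=\mathbb E_{\underline\theta}(\delta(X_1,X_2)-H_S(\underline\theta))^2$; $\delta'$ dominates $\delta$ if its risk is $\le$ for all $\underline\theta$ and $<$ for some; $\delta$ is inadmissible if some estimator dominates it. *)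

theory Defs
  imports "HOL-Analysis.Analysis"
begin

definition gdens :: "real \<Rightarrow> real \<Rightarrow> real \<Rightarrow> real" where
  "gdens a th x = (if x > 0 then x powr (a - 1) * exp (- x / th) / (Gamma a * th powr a) else 0)"

definition gcdf :: "real \<Rightarrow> real \<Rightarrow> real" where
  "gcdf a z = (LBINT t=0..z. gdens a 1 t)"

definition c1 :: "real \<Rightarrow> real" where
  "c1 a = Digamma a"

definition c2 :: "real \<Rightarrow> real" where
  "c2 a = 2 * (LINT z:{0<..}|lborel. ln z * gcdf a z * gdens a 1 z)"

definition HS :: "real \<Rightarrow> real \<Rightarrow> real \<Rightarrow> real \<Rightarrow> real" where
  "HS th1 th2 x1 x2 = (if x1 \<ge> x2 then ln th1 else ln th2)"

definition risk :: "real \<Rightarrow> real \<Rightarrow> real \<Rightarrow> (real \<Rightarrow> real \<Rightarrow> real) \<Rightarrow> ennreal" where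
  "risk a th1 th2 d = (\<integral>\<^sup>+ p. ennreal ((d (fst p) (snd p) - HS th1 th2 (fst p) (snd p))\<^sup>2
        * gdens a th1 (fst p) * gdens a th2 (snd p)) \<partial>(lborel \<Otimes>\<^sub>M lborel))"

definition dominates :: "real \<Rightarrow> (real \<Rightarrow> real \<Rightarrow> real) \<Rightarrow> (real \<Rightarrow> real \<Rightarrow> real) \<Rightarrow> bool" where
  "dominates a d' d \<longleftrightarrow>
     (\<forall>th1>0. \<forall>th2>0. risk a th1 th2 d' \<le> risk a th1 th2 d) \<and>
     (\<exists>th1>0. \<exists>th2>0. risk a th1 th2 d' < risk a th1 th2 d)"

definition inadmissible :: "real \<Rightarrow> (real \<Rightarrow> real \<Rightarrow> real) \<Rightarrow> bool" where
  "inadmissible a d \<longleftrightarrow> (\<exists>d'. dominates a d' d)"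

definition delta :: "real \<Rightarrow> real \<Rightarrow> real \<Rightarrow> real" where
  "delta c x1 x2 = ln (max x1 x2) - c"

definition deltaS :: "real \<Rightarrow> real \<Rightarrow> real \<Rightarrow> real \<Rightarrow> real" where
  "deltaS a c x1 x2 =
     (if min x1 x2 / max x1 x2 < exp (Digamma (2 * a) - c) - 1
      then ln (max x1 x2) - c else ln (x1 + x2) - Digamma (2 * a))"

end

theory Submission
  imports Defs
begin

text \<open>
  All estimators involved are of the form \<open>ln Z2 - \<phi>\<close>. For \<open>c < Digamma a\<close>, condition on the
  smaller observation: the larger one is then a gamma variable conditioned to exceed it, and
  conditioning a gamma variable \<open>Y\<close> on \<open>Y > s\<close> only increases the mean \<open>Digamma a\<close> of \<open>ln Y\<close>;
  so moving \<open>c\<close> up to \<open>Digamma a\<close> lowers every conditional risk.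

  For the shrinkage estimators, pass to \<open>Z2\<close> and the ratio \<open>r = Z1 / Z2\<close>. Given \<open>r\<close> and which
  observation is the larger, \<open>Z2\<close> is a scaled \<open>Gamma (2 * a)\<close> variable, and by Chebyshev's sum
  inequality over the two orderings the conditional mean of \<open>ln Z2 - H_S\<close> given \<open>r\<close> is at most
  \<open>Digamma (2 * a) - ln (1 + r)\<close>. Truncating \<open>c\<close> at this value, which is exactly what
  \<open>deltaS\<close> does, therefore never increases the conditional quadratic loss, and decreases it on
  a set of positive measure when \<open>c > Digamma (2 * a) - ln 2\<close>.

  Finally the risk of \<open>delta c\<close> is a quadratic in \<open>c\<close> minimised at the mean of \<open>ln Z2 - H_S\<close>,
  which is at most the mean \<open>c2 a\<close> of \<open>ln (max (X1 / th1) (X2 / th2))\<close>; and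
  \<open>c2 a > Digamma (2 * a) - ln 2\<close> because at unit scales \<open>c2 a\<close> is the mean of
  \<open>Digamma (2 * a) - ln (1 + r)\<close>.
\<close>

lemma abs_le_square_plus_one: "\<bar>x :: real\<bar> \<le> x\<^sup>2 + 1"
proof (cases "\<bar>x\<bar> \<le> 1")
  case False
  then have "\<bar>x\<bar> * 1 \<le> \<bar>x\<bar> * \<bar>x\<bar>" by (intro mult_left_mono) auto
  then show ?thesis by (simp add: power2_eq_square)
qed (use zero_le_power2[of x] in linarith)

lemma weighted_sum_le_of_oppositely_ordered:
  fixes p q x y l :: real
  assumes "p \<ge> 0" "q \<ge> 0" "(p - q) * (x - y) \<le> 0" "x + y \<le> 2 * l"
  shows "p * x + q * y \<le> (p + q) * l"
proof -
  have "p * x + q * y = (p + q) * ((x + y) / 2) + (p - q) * (x - y) / 2" by (simp add: field_simps)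
  moreover have "(p + q) * ((x + y) / 2) \<le> (p + q) * l" using assms by (intro mult_left_mono) auto
  ultimately show ?thesis using assms(3) by linarith
qed

lemma quadratic_coefficients_eq:
  fixes A B A' B' C :: real
  assumes "\<And>t. A - 2 * t * B + t\<^sup>2 = A' - 2 * t * B' + t\<^sup>2 * C"
  shows "B = B'" and "C = 1"
  using assms[of 0] assms[of 1] assms[of "-1"] by simp_all

lemma Digamma_less_ln:
  assumes x: "(x :: real) > 0"
  shows "Digamma x < ln x"
proof -
  have "\<exists>z>x. z < x + 1 \<and> ln_Gamma (x + 1) - ln_Gamma x = (x + 1 - x) * Digamma z"
    by (rule MVT2) (use x in \<open>auto intro!: has_field_derivative_ln_Gamma_real\<close>)
  then obtain z where z: "x < z" "z < x + 1" "ln_Gamma (x + 1) - ln_Gamma x = Digamma z" by auto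
  have "x \<notin> \<int>\<^sub>\<le>\<^sub>0" using x by (auto elim!: nonpos_Ints_cases)
  then have "ln_Gamma (x + 1) - ln_Gamma x = ln x"
    using x Gamma_real_pos[of x]
    by (simp add: ln_Gamma_real_pos less_imp_neq[symmetric] Gamma_plus1 ln_mult)
  moreover have "Digamma x < Digamma z" using x z by (intro Digamma_real_strict_mono) auto
  ultimately show ?thesis using z by simp
qed

lemma AE_lborel_ex_in_interval:
  assumes "AE x in lborel. P x" "a < (b :: real)"
  shows "\<exists>x\<in>{a<..<b}. P x"
proof (rule ccontr)
  assume "\<not> ?thesis"
  then have "{a<..<b} \<subseteq> {x. \<not> P x}" by auto
  moreover obtain N where "{x \<in> space lborel. \<not> P x} \<subseteq> N" "N \<in> sets lborel" "emeasure lborel N = 0"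
    using assms(1) by (auto elim!: AE_E)
  ultimately have "emeasure lborel {a<..<b} \<le> emeasure lborel N" by (intro emeasure_mono) auto
  then show False using \<open>emeasure lborel N = 0\<close> assms(2) by simp
qed

lemma integral_pos_if_pos_on_interval:
  fixes f :: "real \<Rightarrow> real"
  assumes f: "integrable lborel f" and nonneg: "\<And>x. 0 \<le> f x"
    and pos: "\<And>x. x \<in> {a<..<b} \<Longrightarrow> 0 < f x" and "a < b"
  shows "integral\<^sup>L lborel f > 0"
proof -
  have "integral\<^sup>L lborel f \<noteq> 0"
  proof
    assume "integral\<^sup>L lborel f = 0"
    then have "AE x in lborel. f x = 0"
      using integral_nonneg_eq_0_iff_AE[OF f] nonneg by simp
    then show False using AE_lborel_ex_in_interval[OF _ \<open>a < b\<close>] pos by force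
  qed
  moreover have "integral\<^sup>L lborel f \<ge> 0" using nonneg by (simp add: integral_nonneg_AE)
  ultimately show ?thesis by simp
qed

lemma nn_integral_less_if_less_on_interval:
  fixes f g :: "real \<Rightarrow> ennreal"
  assumes [measurable]: "f \<in> borel_measurable lborel" "g \<in> borel_measurable lborel"
    and fin: "(\<integral>\<^sup>+x. f x \<partial>lborel) \<noteq> \<infinity>" and le: "\<And>x. f x \<le> g x"
    and less: "\<And>x. x \<in> {a<..<b} \<Longrightarrow> f x < g x" and "a < b"
  shows "(\<integral>\<^sup>+x. f x \<partial>lborel) < (\<integral>\<^sup>+x. g x \<partial>lborel)"
proof (rule nn_integral_less)
  show "\<not> (AE x in lborel. g x \<le> f x)"
    using AE_lborel_ex_in_interval[where P = "\<lambda>x. g x \<le> f x", OF _ \<open>a < b\<close>] less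
    by (force simp: not_le[symmetric])
qed (use fin le in auto)

lemma nn_integral_lborel_pair_mult:
  fixes f g :: "real \<Rightarrow> ennreal"
  assumes [measurable]: "f \<in> borel_measurable borel" "g \<in> borel_measurable borel"
  shows "(\<integral>\<^sup>+p. f (fst p) * g (snd p) \<partial>(lborel \<Otimes>\<^sub>M lborel))
    = (\<integral>\<^sup>+x. f x \<partial>lborel) * (\<integral>\<^sup>+y. g y \<partial>lborel)"
proof -
  have "(\<integral>\<^sup>+p. f (fst p) * g (snd p) \<partial>(lborel \<Otimes>\<^sub>M lborel)) = (\<integral>\<^sup>+x. \<integral>\<^sup>+y. f x * g y \<partial>lborel \<partial>lborel)"
    by (subst lborel.nn_integral_fst[symmetric]) auto
  also have "\<dots> = (\<integral>\<^sup>+x. f x * (\<integral>\<^sup>+y. g y \<partial>lborel) \<partial>lborel)"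
    by (intro nn_integral_cong nn_integral_cmult) measurable
  also have "\<dots> = (\<integral>\<^sup>+x. f x \<partial>lborel) * (\<integral>\<^sup>+y. g y \<partial>lborel)"
    by (rule nn_integral_multc) measurable
  finally show ?thesis .
qed

lemma integrable_lborel_pair_mult:
  fixes f g :: "real \<Rightarrow> real"
  assumes f: "integrable lborel f" and g: "integrable lborel g"
  shows "integrable (lborel \<Otimes>\<^sub>M lborel) (\<lambda>p. f (fst p) * g (snd p))"
proof -
  have [measurable]: "f \<in> borel_measurable borel" "g \<in> borel_measurable borel"
    using f g by (simp_all cong: measurable_cong_sets)
  have "(\<integral>\<^sup>+p. ennreal (norm (f (fst p) * g (snd p))) \<partial>(lborel \<Otimes>\<^sub>M lborel))
      = (\<integral>\<^sup>+p. ennreal (norm (f (fst p))) * ennreal (norm (g (snd p))) \<partial>(lborel \<Otimes>\<^sub>M lborel))"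
    by (simp add: abs_mult ennreal_mult)
  also have "\<dots> = (\<integral>\<^sup>+x. ennreal (norm (f x)) \<partial>lborel) * (\<integral>\<^sup>+y. ennreal (norm (g y)) \<partial>lborel)"
    by (rule nn_integral_lborel_pair_mult) measurable
  also have "\<dots> < \<infinity>"
    using f g by (simp add: integrable_iff_bounded ennreal_mult_less_top)
  finally show ?thesis by (simp add: integrable_iff_bounded)
qed

lemma nn_integral_lessThan_scaled:
  fixes G :: "real \<Rightarrow> ennreal"
  assumes [measurable]: "G \<in> borel_measurable borel" and s: "s > 0" and G0: "\<And>x. x \<le> 0 \<Longrightarrow> G x = 0"
  shows "(\<integral>\<^sup>+x. indicator {..<s} x * G x \<partial>lborel)
    = (\<integral>\<^sup>+r. indicator {0<..<1} r * (ennreal s * G (r * s)) \<partial>lborel)"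
proof -
  have "(\<integral>\<^sup>+x. indicator {..<s} x * G x \<partial>lborel)
      = ennreal \<bar>s\<bar> * (\<integral>\<^sup>+r. indicator {..<s} (0 + s * r) * G (0 + s * r) \<partial>lborel)"
    using s by (intro nn_integral_real_affine) auto
  also have "\<dots> = (\<integral>\<^sup>+r. ennreal s * (indicator {..<s} (s * r) * G (s * r)) \<partial>lborel)"
    using s by (subst nn_integral_cmult) auto
  also have "\<dots> = (\<integral>\<^sup>+r. indicator {0<..<1} r * (ennreal s * G (r * s)) \<partial>lborel)"
  proof (intro nn_integral_cong)
    fix r :: real
    show "ennreal s * (indicator {..<s} (s * r) * G (s * r)) = indicator {0<..<1} r * (ennreal s * G (r * s))"
    proof (cases "r > 0")
      case False
      then have "s * r \<le> 0" using s by (simp add: mult_nonneg_nonpos)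
      then show ?thesis using G0[of "s * r"] by (simp add: mult.commute)
    qed (use s in \<open>auto simp: indicator_def mult.commute\<close>)
  qed
  finally show ?thesis .
qed

lemma nn_integral_below_diagonal:
  fixes F :: "real \<times> real \<Rightarrow> ennreal"
  assumes F[measurable]: "F \<in> borel_measurable (lborel \<Otimes>\<^sub>M lborel)"
    and F0: "\<And>x s. x \<le> 0 \<or> s \<le> 0 \<Longrightarrow> F (x, s) = 0"
  shows "(\<integral>\<^sup>+s. \<integral>\<^sup>+x. indicator {..<s} x * F (x, s) \<partial>lborel \<partial>lborel)
    = (\<integral>\<^sup>+r. indicator {0<..<1} r * (\<integral>\<^sup>+s. ennreal s * F (r * s, s) \<partial>lborel) \<partial>lborel)"
proof -
  have [measurable]: "F \<in> borel_measurable (borel \<Otimes>\<^sub>M borel)"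
    using F by (simp cong: measurable_cong_sets)
  have "(\<integral>\<^sup>+s. \<integral>\<^sup>+x. indicator {..<s} x * F (x, s) \<partial>lborel \<partial>lborel)
      = (\<integral>\<^sup>+s. \<integral>\<^sup>+r. indicator {0<..<1} r * (ennreal s * F (r * s, s)) \<partial>lborel \<partial>lborel)"
  proof (rule nn_integral_cong)
    fix s :: real
    show "(\<integral>\<^sup>+x. indicator {..<s} x * F (x, s) \<partial>lborel)
        = (\<integral>\<^sup>+r. indicator {0<..<1} r * (ennreal s * F (r * s, s)) \<partial>lborel)"
    proof (cases "s > 0")
      case True
      then show ?thesis by (intro nn_integral_lessThan_scaled) (auto simp: F0)
    next
      case False
      then have "F (x, s) = 0" "ennreal s = 0" for x by (auto simp: F0 ennreal_neg)
      then show ?thesis by simp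
    qed
  qed
  also have "\<dots> = (\<integral>\<^sup>+r. \<integral>\<^sup>+s. indicator {0<..<1} r * (ennreal s * F (r * s, s)) \<partial>lborel \<partial>lborel)"
    by (rule lborel_pair.Fubini') measurable
  also have "\<dots> = (\<integral>\<^sup>+r. indicator {0<..<1} r * (\<integral>\<^sup>+s. ennreal s * F (r * s, s) \<partial>lborel) \<partial>lborel)"
    by (intro nn_integral_cong nn_integral_cmult) measurable
  finally show ?thesis .
qed

text \<open>Polar-type coordinates for the positive quadrant: a point is written as \<open>(r * s, s)\<close> or
  \<open>(s, r * s)\<close> with \<open>s\<close> the larger coordinate and \<open>r \<in> (0, 1)\<close> the ratio of the smaller to
  the larger one; the Jacobian is \<open>s\<close>.\<close>

lemma nn_integral_pair_ratio:
  fixes F :: "real \<times> real \<Rightarrow> ennreal"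
  assumes F[measurable]: "F \<in> borel_measurable (lborel \<Otimes>\<^sub>M lborel)"
    and F0: "\<And>x1 x2. x1 \<le> 0 \<or> x2 \<le> 0 \<Longrightarrow> F (x1, x2) = 0"
  shows "(\<integral>\<^sup>+p. F p \<partial>(lborel \<Otimes>\<^sub>M lborel))
    = (\<integral>\<^sup>+r. indicator {0<..<1} r
        * ((\<integral>\<^sup>+s. ennreal s * F (r * s, s) \<partial>lborel) + (\<integral>\<^sup>+s. ennreal s * F (s, r * s) \<partial>lborel)) \<partial>lborel)"
proof -
  have [measurable]: "F \<in> borel_measurable (borel \<Otimes>\<^sub>M borel)"
    using F by (simp cong: measurable_cong_sets)
  have "(\<integral>\<^sup>+p. F p \<partial>(lborel \<Otimes>\<^sub>M lborel))
      = (\<integral>\<^sup>+p. indicator {p. fst p < snd p} p * F p + indicator {p. snd p \<le> fst p} p * F p \<partial>(lborel \<Otimes>\<^sub>M lborel))"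
    by (intro nn_integral_cong) (auto simp: indicator_def)
  also have "\<dots> = (\<integral>\<^sup>+p. indicator {p. fst p < snd p} p * F p \<partial>(lborel \<Otimes>\<^sub>M lborel))
      + (\<integral>\<^sup>+p. indicator {p. snd p \<le> fst p} p * F p \<partial>(lborel \<Otimes>\<^sub>M lborel))"
    by (rule nn_integral_add) auto
  also have "(\<integral>\<^sup>+p. indicator {p. fst p < snd p} p * F p \<partial>(lborel \<Otimes>\<^sub>M lborel))
      = (\<integral>\<^sup>+s. \<integral>\<^sup>+x. indicator {..<s} x * F (x, s) \<partial>lborel \<partial>lborel)"
    by (subst lborel_pair.nn_integral_snd[symmetric]) (auto simp: indicator_def)
  also have "(\<integral>\<^sup>+p. indicator {p. snd p \<le> fst p} p * F p \<partial>(lborel \<Otimes>\<^sub>M lborel))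
      = (\<integral>\<^sup>+s. \<integral>\<^sup>+x. indicator {..s} x * F (s, x) \<partial>lborel \<partial>lborel)"
    by (subst lborel.nn_integral_fst[symmetric]) (auto simp: indicator_def)
  also have "(\<integral>\<^sup>+s. \<integral>\<^sup>+x. indicator {..s} x * F (s, x) \<partial>lborel \<partial>lborel)
      = (\<integral>\<^sup>+s. \<integral>\<^sup>+x. indicator {..<s} x * F (s, x) \<partial>lborel \<partial>lborel)"
    by (intro nn_integral_cong nn_integral_cong_AE eventually_mono[OF AE_lborel_singleton])
      (auto simp: indicator_def)
  also have "(\<integral>\<^sup>+s. \<integral>\<^sup>+x. indicator {..<s} x * F (x, s) \<partial>lborel \<partial>lborel)
      = (\<integral>\<^sup>+r. indicator {0<..<1} r * (\<integral>\<^sup>+s. ennreal s * F (r * s, s) \<partial>lborel) \<partial>lborel)"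
    by (rule nn_integral_below_diagonal[OF F F0])
  also have "(\<integral>\<^sup>+s. \<integral>\<^sup>+x. indicator {..<s} x * F (s, x) \<partial>lborel \<partial>lborel)
      = (\<integral>\<^sup>+r. indicator {0<..<1} r * (\<integral>\<^sup>+s. ennreal s * F (s, r * s) \<partial>lborel) \<partial>lborel)"
    by (rule nn_integral_below_diagonal[where F = "\<lambda>p. F (snd p, fst p)", simplified])
      (auto simp: F0)
  also have "(\<integral>\<^sup>+r. indicator {0<..<1} r * (\<integral>\<^sup>+s. ennreal s * F (r * s, s) \<partial>lborel) \<partial>lborel)
      + (\<integral>\<^sup>+r. indicator {0<..<1} r * (\<integral>\<^sup>+s. ennreal s * F (s, r * s) \<partial>lborel) \<partial>lborel)
      = (\<integral>\<^sup>+r. indicator {0<..<1} r * (\<integral>\<^sup>+s. ennreal s * F (r * s, s) \<partial>lborel)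
      + indicator {0<..<1} r * (\<integral>\<^sup>+s. ennreal s * F (s, r * s) \<partial>lborel) \<partial>lborel)"
    by (rule nn_integral_add[symmetric]) measurable
  finally show ?thesis by (simp add: distrib_left)
qed

section \<open>Integrals against the gamma kernel\<close>

definition gamma_kernel :: "real \<Rightarrow> real \<Rightarrow> real" where
  "gamma_kernel b y = (if y > 0 then y powr (b - 1) * exp (- y) else 0)"

lemma gamma_kernel_nonneg: "gamma_kernel b y \<ge> 0"
  by (simp add: gamma_kernel_def)

lemma gamma_kernel_pos: "y > 0 \<Longrightarrow> gamma_kernel b y > 0"
  by (simp add: gamma_kernel_def)

lemma borel_measurable_gamma_kernel [measurable]: "gamma_kernel b \<in> borel_measurable borel"
  unfolding gamma_kernel_def by measurable

lemma nn_integral_gamma_kernel: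
  assumes "b > 0"
  shows "(\<integral>\<^sup>+y. ennreal (gamma_kernel b y) \<partial>lborel) = ennreal (Gamma b)"
proof -
  have "ennreal (Gamma b) = (\<integral>\<^sup>+t. ennreal (indicator {0..} t * t powr (b - 1) / exp t) \<partial>lborel)"
    using Gamma_conv_nn_integral_real[OF assms] by simp
  also have "\<dots> = (\<integral>\<^sup>+y. ennreal (gamma_kernel b y) \<partial>lborel)"
    by (intro nn_integral_cong) (auto simp: gamma_kernel_def indicator_def exp_minus field_simps)
  finally show ?thesis ..
qed

lemma has_bochner_integral_gamma_kernel:
  "b > 0 \<Longrightarrow> has_bochner_integral lborel (gamma_kernel b) (Gamma b)"
  by (rule has_bochner_integral_nn_integral) (auto simp: gamma_kernel_nonneg nn_integral_gamma_kernel)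

lemma integrable_gamma_kernel: "b > 0 \<Longrightarrow> integrable lborel (gamma_kernel b)"
  using has_bochner_integral_gamma_kernel by (auto simp: has_bochner_integral_iff)

lemma integral_gamma_kernel: "b > 0 \<Longrightarrow> integral\<^sup>L lborel (gamma_kernel b) = Gamma b"
  using has_bochner_integral_gamma_kernel by (auto simp: has_bochner_integral_iff)

lemma ln_squared_le:
  fixes b y :: real
  assumes b: "b > 0" and y: "y > 0"
  shows "(ln y)\<^sup>2 \<le> 4 * y + 16 / b\<^sup>2 * y powr (- b / 2)"
proof (cases "y \<ge> 1")
  case True
  have "ln y = 2 * ln (sqrt y)" using y by (simp add: ln_sqrt)
  also have "\<dots> < 2 * sqrt y" using y ln_less_self[of "sqrt y"] by simp
  finally have "(ln y)\<^sup>2 \<le> (2 * sqrt y)\<^sup>2" using True by (intro power_mono) auto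
  also have "\<dots> = 4 * y" using y by (simp add: power_mult_distrib)
  finally show ?thesis using y by (smt (verit) divide_nonneg_nonneg mult_nonneg_nonneg powr_ge_zero zero_le_power2)
next
  case False
  define z where "z = y powr (- b / 4)"
  have "z > 0" using y by (simp add: z_def)
  then have "ln z < z" by (rule ln_less_self)
  moreover have "ln z = - (b/4) * ln y" using y by (simp add: z_def ln_powr)
  ultimately have "- ln y < (4/b) * z" using b by (simp add: field_simps)
  moreover have "ln y \<le> 0" using False y by simp
  ultimately have "(- ln y)\<^sup>2 \<le> ((4/b) * z)\<^sup>2" by (intro power_mono) auto
  also have "\<dots> = 16 / b\<^sup>2 * y powr (- b / 2)"
    using y by (simp add: z_def power_mult_distrib power_divide power2_eq_square powr_add[symmetric])
  finally show ?thesis using y by (smt (verit) power2_minus)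
qed

lemma gamma_kernel_ln_squared_le:
  assumes b: "b > 0"
  shows "gamma_kernel b y * (ln y)\<^sup>2 \<le> 4 * gamma_kernel (b + 1) y + 16 / b\<^sup>2 * gamma_kernel (b / 2) y"
proof (cases "y > 0")
  case True
  have "gamma_kernel b y * (ln y)\<^sup>2 \<le> gamma_kernel b y * (4 * y + 16 / b\<^sup>2 * y powr (- b / 2))"
    by (intro mult_left_mono ln_squared_le b True gamma_kernel_nonneg)
  also have "\<dots> = 4 * gamma_kernel (b + 1) y + 16 / b\<^sup>2 * gamma_kernel (b / 2) y"
    using True powr_add[of y "b - 1" 1] powr_add[of y "b - 1" "- b / 2"]
    by (simp add: gamma_kernel_def algebra_simps)
  finally show ?thesis .
qed (simp add: gamma_kernel_def)

lemma integrable_gamma_kernel_ln_squared: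
  assumes b: "b > 0"
  shows "integrable lborel (\<lambda>y. gamma_kernel b y * (ln y)\<^sup>2)"
proof (rule Bochner_Integration.integrable_bound)
  show "integrable lborel (\<lambda>y. 4 * gamma_kernel (b + 1) y + 16 / b\<^sup>2 * gamma_kernel (b / 2) y)"
    using b by (intro Bochner_Integration.integrable_add Bochner_Integration.integrable_mult_right
        integrable_gamma_kernel) auto
  show "AE y in lborel. norm (gamma_kernel b y * (ln y)\<^sup>2)
      \<le> norm (4 * gamma_kernel (b + 1) y + 16 / b\<^sup>2 * gamma_kernel (b / 2) y)"
  proof (intro AE_I2)
    fix y
    have nonneg: "0 \<le> gamma_kernel b y * (ln y)\<^sup>2" by (simp add: gamma_kernel_nonneg)
    note le = gamma_kernel_ln_squared_le[OF b, of y]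
    show "norm (gamma_kernel b y * (ln y)\<^sup>2)
        \<le> norm (4 * gamma_kernel (b + 1) y + 16 / b\<^sup>2 * gamma_kernel (b / 2) y)"
      using nonneg le by simp
  qed
qed measurable

lemma integrable_gamma_kernel_ln:
  assumes b: "b > 0"
  shows "integrable lborel (\<lambda>y. gamma_kernel b y * ln y)"
proof (rule Bochner_Integration.integrable_bound)
  show "integrable lborel (\<lambda>y. gamma_kernel b y * (ln y)\<^sup>2 + gamma_kernel b y)"
    using b by (intro Bochner_Integration.integrable_add integrable_gamma_kernel_ln_squared
        integrable_gamma_kernel)
  show "AE y in lborel. norm (gamma_kernel b y * ln y) \<le> norm (gamma_kernel b y * (ln y)\<^sup>2 + gamma_kernel b y)"
  proof (intro AE_I2)
    fix y
    have "gamma_kernel b y * \<bar>ln y\<bar> \<le> gamma_kernel b y * ((ln y)\<^sup>2 + 1)"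
      by (intro mult_left_mono abs_le_square_plus_one gamma_kernel_nonneg)
    then show "norm (gamma_kernel b y * ln y) \<le> norm (gamma_kernel b y * (ln y)\<^sup>2 + gamma_kernel b y)"
      using gamma_kernel_nonneg[of b y] by (simp add: abs_mult algebra_simps)
  qed
qed measurable

lemma gamma_kernel_ln_le:
  assumes "b + e > 0"
  shows "gamma_kernel b y + e * (gamma_kernel b y * ln y) \<le> gamma_kernel (b + e) y"
proof (cases "y > 0")
  case True
  have "1 + e * ln y \<le> exp (e * ln y)" by (rule exp_ge_add_one_self)
  also have "exp (e * ln y) = y powr e" using True by (simp add: powr_def)
  finally have "gamma_kernel b y * (1 + e * ln y) \<le> gamma_kernel b y * y powr e"
    by (intro mult_left_mono gamma_kernel_nonneg)
  then show ?thesis using True by (simp add: gamma_kernel_def algebra_simps powr_add[symmetric])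
qed (simp add: gamma_kernel_def)

text \<open>Since \<open>y powr e \<ge> 1 + e * ln y\<close>, the line through \<open>(b, Gamma b)\<close> with slope
  \<open>\<integral> gamma_kernel b y * ln y\<close> lies below \<open>Gamma\<close>; hence that slope is \<open>Gamma' b\<close>.\<close>

lemma integral_gamma_kernel_ln:
  assumes b: "b > 0"
  shows "(\<integral>y. gamma_kernel b y * ln y \<partial>lborel) = Gamma b * Digamma b"
proof -
  define J where "J = (\<integral>y. gamma_kernel b y * ln y \<partial>lborel)"
  have below: "Gamma b + e * J \<le> Gamma (b + e)" if "b + e > 0" for e
  proof -
    have "Gamma b + e * J = (\<integral>y. gamma_kernel b y + e * (gamma_kernel b y * ln y) \<partial>lborel)"
      using b by (simp add: J_def integrable_gamma_kernel integrable_gamma_kernel_ln integral_gamma_kernel)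
    also have "\<dots> \<le> (\<integral>y. gamma_kernel (b + e) y \<partial>lborel)"
      using b that by (intro integral_mono gamma_kernel_ln_le Bochner_Integration.integrable_add
          Bochner_Integration.integrable_mult_right integrable_gamma_kernel integrable_gamma_kernel_ln)
    finally show ?thesis using that by (simp add: integral_gamma_kernel)
  qed
  have "b \<notin> \<int>\<^sub>\<le>\<^sub>0" using b by (auto elim!: nonpos_Ints_cases)
  then have "((\<lambda>y. (Gamma y - Gamma b) / (y - b)) \<longlongrightarrow> Gamma b * Digamma b) (at b)"
    using has_field_derivative_Gamma[of b UNIV] by (simp add: has_field_derivative_iff)
  then have right: "((\<lambda>y. (Gamma y - Gamma b) / (y - b)) \<longlongrightarrow> Gamma b * Digamma b) (at_right b)"
    and left: "((\<lambda>y. (Gamma y - Gamma b) / (y - b)) \<longlongrightarrow> Gamma b * Digamma b) (at_left b)"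
    by (simp_all add: filterlim_at_split)
  have "J \<le> Gamma b * Digamma b"
  proof (rule tendsto_lowerbound[OF right])
    show "\<forall>\<^sub>F y in at_right b. J \<le> (Gamma y - Gamma b) / (y - b)"
    proof (intro eventually_at_rightI[of b "b + 1"])
      fix y assume y: "y \<in> {b<..<b + 1}"
      have "Gamma b + (y - b) * J \<le> Gamma (b + (y - b))" using y b by (intro below) auto
      then show "J \<le> (Gamma y - Gamma b) / (y - b)" using y by (simp add: field_simps)
    qed simp
  qed simp
  moreover have "Gamma b * Digamma b \<le> J"
  proof (rule tendsto_upperbound[OF left])
    show "\<forall>\<^sub>F y in at_left b. (Gamma y - Gamma b) / (y - b) \<le> J"
    proof (intro eventually_at_leftI[of 0 b])
      fix y assume y: "y \<in> {0<..<b}"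
      have "Gamma b + (y - b) * J \<le> Gamma (b + (y - b))" using y b by (intro below) auto
      then show "(Gamma y - Gamma b) / (y - b) \<le> J" using y by (simp add: field_simps)
    qed (use b in simp)
  qed simp
  ultimately show ?thesis by (simp add: J_def)
qed

text \<open>The variance of \<open>ln Y\<close> for \<open>Y\<close> gamma distributed with shape \<open>b\<close> (it equals
  the trigamma function at \<open>b\<close>, but only its nonnegativity is needed).\<close>

definition ln_gamma_variance :: "real \<Rightarrow> real" where
  "ln_gamma_variance b = (\<integral>y. gamma_kernel b y * (ln y)\<^sup>2 \<partial>lborel) / Gamma b - (Digamma b)\<^sup>2"

lemma gamma_kernel_ln_deviation_expand:
  "gamma_kernel b y * (ln y - w)\<^sup>2
    = gamma_kernel b y * (ln y)\<^sup>2 - (2 * w) * (gamma_kernel b y * ln y) + w\<^sup>2 * gamma_kernel b y"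
  by (simp add: power2_eq_square algebra_simps)

lemma integrable_gamma_kernel_ln_deviation:
  "b > 0 \<Longrightarrow> integrable lborel (\<lambda>y. gamma_kernel b y * (ln y - w)\<^sup>2)"
  unfolding gamma_kernel_ln_deviation_expand
  by (intro Bochner_Integration.integrable_add Bochner_Integration.integrable_diff
      Bochner_Integration.integrable_mult_right integrable_gamma_kernel integrable_gamma_kernel_ln
      integrable_gamma_kernel_ln_squared)

lemma integral_gamma_kernel_ln_deviation:
  assumes b: "b > 0"
  shows "(\<integral>y. gamma_kernel b y * (ln y - w)\<^sup>2 \<partial>lborel)
    = Gamma b * ((Digamma b - w)\<^sup>2 + ln_gamma_variance b)"
proof -
  have "(\<integral>y. gamma_kernel b y * (ln y - w)\<^sup>2 \<partial>lborel)
      = (\<integral>y. gamma_kernel b y * (ln y)\<^sup>2 \<partial>lborel) - (2 * w) * (Gamma b * Digamma b) + w\<^sup>2 * Gamma b"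
    unfolding gamma_kernel_ln_deviation_expand using b
    by (simp add: Bochner_Integration.integral_add Bochner_Integration.integral_diff
        Bochner_Integration.integrable_add Bochner_Integration.integrable_diff
        integrable_gamma_kernel integrable_gamma_kernel_ln integrable_gamma_kernel_ln_squared
        integral_gamma_kernel_ln integral_gamma_kernel)
  also have "\<dots> = Gamma b * ((Digamma b - w)\<^sup>2 + ln_gamma_variance b)"
    using Gamma_real_pos[OF b] by (simp add: ln_gamma_variance_def field_simps power2_eq_square)
  finally show ?thesis .
qed

lemma ln_gamma_variance_nonneg:
  assumes b: "b > 0"
  shows "ln_gamma_variance b \<ge> 0"
proof -
  have "0 \<le> (\<integral>y. gamma_kernel b y * (ln y - Digamma b)\<^sup>2 \<partial>lborel)"
    by (intro integral_nonneg_AE AE_I2) (simp add: gamma_kernel_nonneg)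
  also have "\<dots> = Gamma b * ln_gamma_variance b" by (simp add: integral_gamma_kernel_ln_deviation[OF b])
  finally show ?thesis using Gamma_real_pos[OF b] by (simp add: zero_le_mult_iff)
qed

lemma nn_integral_gamma_kernel_ln_deviation:
  assumes b: "b > 0"
  shows "(\<integral>\<^sup>+y. ennreal (gamma_kernel b y * (ln y - w)\<^sup>2) \<partial>lborel)
    = ennreal (Gamma b * ((Digamma b - w)\<^sup>2 + ln_gamma_variance b))"
  using nn_integral_eq_integral[OF integrable_gamma_kernel_ln_deviation[OF b]]
    integral_gamma_kernel_ln_deviation[OF b]
  by (simp add: gamma_kernel_nonneg)

lemma nn_integral_gamma_kernel_scaled_ln_deviation:
  assumes b: "b > 0" and k: "k > 0"
  shows "(\<integral>\<^sup>+s. ennreal (gamma_kernel b (k * s) * (ln s - w)\<^sup>2) \<partial>lborel)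
    = ennreal (Gamma b * ((Digamma b - ln k - w)\<^sup>2 + ln_gamma_variance b) / k)"
proof -
  have "(\<integral>\<^sup>+s. ennreal (gamma_kernel b (k * s) * (ln s - w)\<^sup>2) \<partial>lborel)
      = ennreal \<bar>1/k\<bar> * (\<integral>\<^sup>+y. ennreal (gamma_kernel b (k * (0 + 1/k * y)) * (ln (0 + 1/k * y) - w)\<^sup>2) \<partial>lborel)"
    using k by (intro nn_integral_real_affine) auto
  also have "(\<integral>\<^sup>+y. ennreal (gamma_kernel b (k * (0 + 1/k * y)) * (ln (0 + 1/k * y) - w)\<^sup>2) \<partial>lborel)
      = (\<integral>\<^sup>+y. ennreal (gamma_kernel b y * (ln y - (ln k + w))\<^sup>2) \<partial>lborel)"
    using k by (intro nn_integral_cong) (auto simp: gamma_kernel_def ln_div algebra_simps)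
  also have "\<dots> = ennreal (Gamma b * ((Digamma b - (ln k + w))\<^sup>2 + ln_gamma_variance b))"
    by (rule nn_integral_gamma_kernel_ln_deviation[OF b])
  finally show ?thesis
    using k by (simp add: ennreal_mult'[symmetric] divide_simps diff_diff_eq)
qed

lemma gdens_eq_gamma_kernel:
  assumes th: "th > 0"
  shows "gdens a th x = gamma_kernel a (x / th) / (Gamma a * th)"
proof (cases "x > 0")
  case True
  have "x powr (a - 1) = (x / th) powr (a - 1) * th powr (a - 1)"
    using True th by (simp add: powr_divide)
  moreover have "th powr a = th powr (a - 1) * th" using th powr_add[of th "a - 1" 1] by simp
  moreover have "th powr (a - 1) \<noteq> 0" using th by simp
  ultimately show ?thesis using True th by (simp add: gdens_def gamma_kernel_def field_simps)
next
  case False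
  then have "\<not> x / th > 0" using th by (simp add: divide_nonpos_pos not_less)
  then show ?thesis using False by (simp add: gdens_def gamma_kernel_def)
qed

lemma gdens_nonneg: "a > 0 \<Longrightarrow> th > 0 \<Longrightarrow> gdens a th x \<ge> 0"
  by (simp add: gdens_eq_gamma_kernel gamma_kernel_nonneg)

lemma gdens_pos: "a > 0 \<Longrightarrow> th > 0 \<Longrightarrow> x > 0 \<Longrightarrow> gdens a th x > 0"
  by (simp add: gdens_def)

lemma gdens_nonpos: "x \<le> 0 \<Longrightarrow> gdens a th x = 0"
  by (simp add: gdens_def)

lemma borel_measurable_gdens [measurable]: "(\<lambda>x. gdens a th x) \<in> borel_measurable borel"
  unfolding gdens_def by measurable

lemma nn_integral_gdens_scale:
  assumes th: "th > 0" and [measurable]: "f \<in> borel_measurable borel"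
  shows "(\<integral>\<^sup>+x. f x * ennreal (gdens a th x) \<partial>lborel)
    = (\<integral>\<^sup>+y. f (th * y) * ennreal (gamma_kernel a y / Gamma a) \<partial>lborel)"
proof -
  have "(\<integral>\<^sup>+x. f x * ennreal (gdens a th x) \<partial>lborel)
      = ennreal \<bar>th\<bar> * (\<integral>\<^sup>+y. f (0 + th * y) * ennreal (gdens a th (0 + th * y)) \<partial>lborel)"
    using th by (intro nn_integral_real_affine) auto
  also have "\<dots> = (\<integral>\<^sup>+y. f (th * y) * (ennreal th * ennreal (gdens a th (th * y))) \<partial>lborel)"
    using th by (subst nn_integral_cmult[symmetric]) (auto simp: mult_ac)
  also have "\<dots> = (\<integral>\<^sup>+y. f (th * y) * ennreal (gamma_kernel a y / Gamma a) \<partial>lborel)"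
    using th by (intro nn_integral_cong) (simp add: gdens_eq_gamma_kernel ennreal_mult'[symmetric])
  finally show ?thesis .
qed

lemma nn_integral_gdens:
  assumes a: "a > 0" and th: "th > 0"
  shows "(\<integral>\<^sup>+x. ennreal (gdens a th x) \<partial>lborel) = 1"
proof -
  have "(\<integral>\<^sup>+x. ennreal (gdens a th x) \<partial>lborel) = (\<integral>\<^sup>+y. ennreal (gamma_kernel a y / Gamma a) \<partial>lborel)"
    using nn_integral_gdens_scale[OF th, of "\<lambda>_. 1" a] by simp
  also have "\<dots> = (\<integral>\<^sup>+y. ennreal (1 / Gamma a) * ennreal (gamma_kernel a y) \<partial>lborel)"
    using a by (intro nn_integral_cong) (simp add: ennreal_mult'[symmetric])
  also have "\<dots> = ennreal (1 / Gamma a) * ennreal (Gamma a)"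
    using a by (subst nn_integral_cmult) (auto simp: nn_integral_gamma_kernel)
  also have "\<dots> = 1" using Gamma_real_pos[OF a] by (simp add: ennreal_mult'[symmetric])
  finally show ?thesis .
qed

section \<open>Raising the constant to \<open>Digamma a\<close>\<close>

definition tail_loss :: "real \<Rightarrow> real \<Rightarrow> real \<Rightarrow> ennreal" where
  "tail_loss a s t = (\<integral>\<^sup>+y. ennreal (indicator {s<..} y * (gamma_kernel a y * (ln y - t)\<^sup>2)) \<partial>lborel)"

lemma integrable_tail_loss:
  "a > 0 \<Longrightarrow> integrable lborel (\<lambda>y. indicator {s<..} y * (gamma_kernel a y * (ln y - t)\<^sup>2))"
  using integrable_mult_indicator[OF _ integrable_gamma_kernel_ln_deviation, of "{s<..}" a t] by simp

lemma tail_loss_eq_integral: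
  assumes "a > 0"
  shows "tail_loss a s t = ennreal (\<integral>y. indicator {s<..} y * (gamma_kernel a y * (ln y - t)\<^sup>2) \<partial>lborel)"
  unfolding tail_loss_def using assms
  by (intro nn_integral_eq_integral integrable_tail_loss) (auto simp: gamma_kernel_nonneg)

lemma tail_loss_le:
  assumes a: "a > 0"
  shows "tail_loss a s t \<le> ennreal (Gamma a * ((Digamma a - t)\<^sup>2 + ln_gamma_variance a))"
  unfolding tail_loss_def nn_integral_gamma_kernel_ln_deviation[OF a, symmetric]
  by (intro nn_integral_mono) (auto simp: indicator_def gamma_kernel_nonneg)

lemma borel_measurable_tail_loss [measurable]: "(\<lambda>s. tail_loss a s t) \<in> borel_measurable borel"
proof -
  have "(\<lambda>s. tail_loss a s t)
      = (\<lambda>s. \<integral>\<^sup>+y. ennreal ((if s < y then 1 else 0) * (gamma_kernel a y * (ln y - t)\<^sup>2)) \<partial>lborel)"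
    by (auto simp: tail_loss_def indicator_def intro!: ext nn_integral_cong)
  also have "\<dots> \<in> borel_measurable borel" by measurable
  finally show ?thesis .
qed

text \<open>Conditioning \<open>ln Y\<close> on \<open>Y > s\<close> can only increase its mean \<open>Digamma a\<close>: for
  \<open>s \<le> exp (Digamma a)\<close> the discarded part has integrand \<open>\<le> 0\<close>, otherwise the kept part
  has integrand \<open>\<ge> 0\<close>.\<close>

lemma integral_tail_gamma_kernel_ln_ge:
  assumes a: "a > 0"
  shows "(\<integral>y. indicator {s<..} y * (gamma_kernel a y * (ln y - Digamma a)) \<partial>lborel) \<ge> 0"
proof -
  define f where "f y = gamma_kernel a y * (ln y - Digamma a)" for y
  have f: "integrable lborel f"
    unfolding f_def right_diff_distrib
    by (intro Bochner_Integration.integrable_diff Bochner_Integration.integrable_mult_left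
        integrable_gamma_kernel_ln integrable_gamma_kernel a)
  show ?thesis
  proof (cases "s \<le> exp (Digamma a)")
    case True
    have f_head: "f y \<le> 0" if "y \<le> s" for y
    proof (cases "y > 0")
      case True
      with \<open>y \<le> s\<close> \<open>s \<le> exp (Digamma a)\<close> have "ln y \<le> Digamma a"
        by (metis ln_exp ln_le_cancel_iff exp_gt_zero order_trans)
      then show ?thesis unfolding f_def by (simp add: gamma_kernel_nonneg mult_nonneg_nonpos)
    qed (simp add: f_def gamma_kernel_def)
    have "(\<integral>y. f y \<partial>lborel) = Gamma a * Digamma a - Digamma a * Gamma a"
      unfolding f_def right_diff_distrib using a
      by (simp add: integrable_gamma_kernel_ln integrable_gamma_kernel integral_gamma_kernel_ln
          integral_gamma_kernel)
    also have "(\<integral>y. f y \<partial>lborel) = (\<integral>y. indicator {..s} y * f y + indicator {s<..} y * f y \<partial>lborel)"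
      by (intro Bochner_Integration.integral_cong) (auto simp: indicator_def)
    also have "\<dots> = (\<integral>y. indicator {..s} y * f y \<partial>lborel) + (\<integral>y. indicator {s<..} y * f y \<partial>lborel)"
      using integrable_mult_indicator[OF _ f, of "{..s}"] integrable_mult_indicator[OF _ f, of "{s<..}"]
      by (intro Bochner_Integration.integral_add) auto
    finally have "0 = (\<integral>y. indicator {..s} y * f y \<partial>lborel) + (\<integral>y. indicator {s<..} y * f y \<partial>lborel)"
      by simp
    moreover have "(\<integral>y. indicator {..s} y * f y \<partial>lborel) \<le> 0"
    proof -
      have "0 \<le> (\<integral>y. - (indicator {..s} y * f y) \<partial>lborel)"
        using f_head by (intro integral_nonneg_AE AE_I2) (simp add: indicator_def)
      then show ?thesis by simp
    qed
    ultimately show ?thesis by (simp add: f_def)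
  next
    case False
    have "ln y \<ge> Digamma a" if "y > s" for y
      using that False by (metis exp_gt_zero ln_exp ln_le_cancel_iff not_le order_less_trans less_imp_le)
    then show ?thesis
      by (intro integral_nonneg_AE AE_I2) (auto simp: indicator_def gamma_kernel_nonneg)
  qed
qed

lemma tail_loss_Digamma_less:
  assumes a: "a > 0" and w: "w < Digamma a"
  shows "tail_loss a s (Digamma a) < tail_loss a s w"
proof -
  define p where "p = Digamma a"
  define G1 where "G1 y = indicator {s<..} y * (gamma_kernel a y * (ln y - p))" for y
  define G0 where "G0 y = indicator {s<..} y * gamma_kernel a y" for y
  have "integrable lborel (\<lambda>y. gamma_kernel a y * (ln y - p))"
    unfolding right_diff_distrib
    by (intro Bochner_Integration.integrable_diff Bochner_Integration.integrable_mult_left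
        integrable_gamma_kernel_ln integrable_gamma_kernel a)
  from integrable_mult_indicator[OF _ this, of "{s<..}"]
  have iG1: "integrable lborel G1" unfolding G1_def by simp
  have iG0: "integrable lborel G0"
    unfolding G0_def using integrable_mult_indicator[OF _ integrable_gamma_kernel[OF a], of "{s<..}"] by auto
  have "integral\<^sup>L lborel G1 \<ge> 0"
    unfolding G1_def p_def by (rule integral_tail_gamma_kernel_ln_ge[OF a])
  moreover have "integral\<^sup>L lborel G0 > 0"
    by (rule integral_pos_if_pos_on_interval[OF iG0, of "max s 0" "max s 0 + 1"])
      (auto simp: G0_def gamma_kernel_nonneg gamma_kernel_pos)
  ultimately have "0 < (p - w) * (2 * integral\<^sup>L lborel G1 + (p - w) * integral\<^sup>L lborel G0)"
    using w by (intro mult_pos_pos add_nonneg_pos) (auto simp: p_def)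
  also have "\<dots> = (\<integral>y. indicator {s<..} y * (gamma_kernel a y * (ln y - w)\<^sup>2) \<partial>lborel)
      - (\<integral>y. indicator {s<..} y * (gamma_kernel a y * (ln y - p)\<^sup>2) \<partial>lborel)"
  proof -
    have "indicator {s<..} y * (gamma_kernel a y * (ln y - w)\<^sup>2)
        - indicator {s<..} y * (gamma_kernel a y * (ln y - p)\<^sup>2) = (p - w) * (2 * G1 y + (p - w) * G0 y)" for y
      by (simp add: G1_def G0_def indicator_def power2_eq_square algebra_simps)
    then show ?thesis
      using iG1 iG0 integrable_tail_loss[OF a]
      by (subst Bochner_Integration.integral_diff[symmetric]) auto
  qed
  finally show ?thesis
    unfolding tail_loss_eq_integral[OF a] p_def[symmetric]
    by (simp add: ennreal_less_iff integral_nonneg_AE gamma_kernel_nonneg)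
qed

lemma nn_integral_tail_gdens:
  assumes a: "a > 0" and th: "th > 0"
  shows "(\<integral>\<^sup>+x. ennreal (indicator {s<..} x * (ln x - ln th - t)\<^sup>2) * ennreal (gdens a th x) \<partial>lborel)
    = ennreal (1 / Gamma a) * tail_loss a (s / th) t"
proof -
  have "(\<integral>\<^sup>+x. ennreal (indicator {s<..} x * (ln x - ln th - t)\<^sup>2) * ennreal (gdens a th x) \<partial>lborel)
      = (\<integral>\<^sup>+y. ennreal (indicator {s<..} (th * y) * (ln (th * y) - ln th - t)\<^sup>2)
          * ennreal (gamma_kernel a y / Gamma a) \<partial>lborel)"
    by (rule nn_integral_gdens_scale[OF th]) measurable
  also have "\<dots> = (\<integral>\<^sup>+y. ennreal (1 / Gamma a)
      * ennreal (indicator {s / th<..} y * (gamma_kernel a y * (ln y - t)\<^sup>2)) \<partial>lborel)"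
  proof (intro nn_integral_cong)
    fix y :: real
    show "ennreal (indicator {s<..} (th * y) * (ln (th * y) - ln th - t)\<^sup>2) * ennreal (gamma_kernel a y / Gamma a)
        = ennreal (1 / Gamma a) * ennreal (indicator {s / th<..} y * (gamma_kernel a y * (ln y - t)\<^sup>2))"
    proof (cases "y > 0")
      case True
      have "indicator {s<..} (th * y) = (indicator {s / th<..} y :: real)"
        using th by (auto simp: indicator_def field_simps)
      moreover have "ln (th * y) - ln th - t = ln y - t" using th True by (simp add: ln_mult)
      ultimately show ?thesis using Gamma_real_pos[OF a] gamma_kernel_nonneg[of a y]
        by (simp add: ennreal_mult'[symmetric] ennreal_mult''[symmetric] mult_ac)
    qed (simp add: gamma_kernel_def)
  qed
  also have "\<dots> = ennreal (1 / Gamma a) * tail_loss a (s / th) t"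
    unfolding tail_loss_def by (subst nn_integral_cmult) auto
  finally show ?thesis .
qed

lemma nn_integral_tail_gdens_closed:
  assumes a: "a > 0" and th: "th > 0"
  shows "(\<integral>\<^sup>+x. ennreal (indicator {s..} x * (ln x - ln th - t)\<^sup>2) * ennreal (gdens a th x) \<partial>lborel)
    = ennreal (1 / Gamma a) * tail_loss a (s / th) t"
proof -
  have "AE x in lborel. x \<noteq> s" by (rule AE_lborel_singleton)
  then have "(\<integral>\<^sup>+x. ennreal (indicator {s..} x * (ln x - ln th - t)\<^sup>2) * ennreal (gdens a th x) \<partial>lborel)
      = (\<integral>\<^sup>+x. ennreal (indicator {s<..} x * (ln x - ln th - t)\<^sup>2) * ennreal (gdens a th x) \<partial>lborel)"
    by (intro nn_integral_cong_AE) (auto elim!: eventually_mono simp: indicator_def)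
  then show ?thesis using nn_integral_tail_gdens[OF a th] by simp
qed

text \<open>The part of the risk of \<open>delta t\<close> coming from the event that the observation with
  scale \<open>th'\<close> is the larger one, integrated over the smaller one, which has scale \<open>th\<close>.\<close>

definition tail_risk :: "real \<Rightarrow> real \<Rightarrow> real \<Rightarrow> real \<Rightarrow> ennreal" where
  "tail_risk a th th' t = (\<integral>\<^sup>+x. ennreal (gdens a th x) * (ennreal (1 / Gamma a) * tail_loss a (x / th') t) \<partial>lborel)"

lemma risk_delta_eq_tail_risk:
  assumes a: "a > 0" and th1: "th1 > 0" and th2: "th2 > 0"
  shows "risk a th1 th2 (delta t) = tail_risk a th2 th1 t + tail_risk a th1 th2 t"
proof -
  define A where "A p = ennreal (gdens a th2 (snd p))
      * (ennreal (indicator {p. snd p \<le> fst p} p * (ln (fst p) - ln th1 - t)\<^sup>2) * ennreal (gdens a th1 (fst p)))"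
    for p :: "real \<times> real"
  define B where "B p = ennreal (gdens a th1 (fst p))
      * (ennreal (indicator {p. fst p < snd p} p * (ln (snd p) - ln th2 - t)\<^sup>2) * ennreal (gdens a th2 (snd p)))"
    for p :: "real \<times> real"
  have [measurable]: "A \<in> borel_measurable (lborel \<Otimes>\<^sub>M lborel)" "B \<in> borel_measurable (lborel \<Otimes>\<^sub>M lborel)"
    unfolding A_def B_def by measurable
  have "risk a th1 th2 (delta t) = (\<integral>\<^sup>+p. A p + B p \<partial>(lborel \<Otimes>\<^sub>M lborel))"
    unfolding risk_def
  proof (intro nn_integral_cong)
    fix p :: "real \<times> real"
    show "ennreal ((delta t (fst p) (snd p) - HS th1 th2 (fst p) (snd p))\<^sup>2
        * gdens a th1 (fst p) * gdens a th2 (snd p)) = A p + B p"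
      using gdens_nonneg[OF a th1, of "fst p"] gdens_nonneg[OF a th2, of "snd p"]
      by (cases "snd p \<le> fst p")
        (auto simp: A_def B_def delta_def HS_def max_def indicator_def algebra_simps
          ennreal_mult'[symmetric] ennreal_mult''[symmetric])
  qed
  also have "\<dots> = (\<integral>\<^sup>+x2. \<integral>\<^sup>+x1. A (x1, x2) \<partial>lborel \<partial>lborel) + (\<integral>\<^sup>+x1. \<integral>\<^sup>+x2. B (x1, x2) \<partial>lborel \<partial>lborel)"
    by (simp add: nn_integral_add lborel_pair.nn_integral_snd lborel.nn_integral_fst)
  also have "(\<integral>\<^sup>+x2. \<integral>\<^sup>+x1. A (x1, x2) \<partial>lborel \<partial>lborel) = tail_risk a th2 th1 t"
    unfolding A_def tail_risk_def
    by (intro nn_integral_cong)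
      (simp add: nn_integral_cmult nn_integral_tail_gdens_closed[OF a th1, symmetric] indicator_def)
  also have "(\<integral>\<^sup>+x1. \<integral>\<^sup>+x2. B (x1, x2) \<partial>lborel \<partial>lborel) = tail_risk a th1 th2 t"
    unfolding B_def tail_risk_def
    by (intro nn_integral_cong)
      (simp add: nn_integral_cmult nn_integral_tail_gdens[OF a th2, symmetric] indicator_def)
  finally show ?thesis .
qed

lemma tail_risk_finite:
  assumes a: "a > 0" and th: "th > 0"
  shows "tail_risk a th th' t < \<infinity>"
proof -
  define K where "K = ennreal (1 / Gamma a) * ennreal (Gamma a * ((Digamma a - t)\<^sup>2 + ln_gamma_variance a))"
  have "tail_risk a th th' t \<le> (\<integral>\<^sup>+x. K * ennreal (gdens a th x) \<partial>lborel)"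
    unfolding tail_risk_def K_def
    by (intro nn_integral_mono) (simp add: mult_ac mult_left_mono tail_loss_le[OF a])
  also have "\<dots> = K" by (simp add: nn_integral_cmult nn_integral_gdens[OF a th])
  also have "K < \<infinity>" unfolding K_def by (simp add: ennreal_mult_less_top)
  finally show ?thesis .
qed

lemma risk_delta_finite:
  assumes "a > 0" "th1 > 0" "th2 > 0"
  shows "risk a th1 th2 (delta t) < \<infinity>"
  using tail_risk_finite[OF assms(1,3)] tail_risk_finite[OF assms(1,2)]
  by (simp add: risk_delta_eq_tail_risk[OF assms])

lemma tail_risk_Digamma_le:
  assumes a: "a > 0" and c: "c < Digamma a"
  shows "tail_risk a th th' (Digamma a) \<le> tail_risk a th th' c"
  unfolding tail_risk_def
  using tail_loss_Digamma_less[OF a c] by (intro nn_integral_mono mult_left_mono) (auto intro: less_imp_le)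

lemma tail_risk_Digamma_less:
  assumes a: "a > 0" and th: "th > 0" and c: "c < Digamma a"
  shows "tail_risk a th th' (Digamma a) < tail_risk a th th' c"
  unfolding tail_risk_def
proof (rule nn_integral_less_if_less_on_interval[of _ _ 0 1])
  show "(\<integral>\<^sup>+x. ennreal (gdens a th x) * (ennreal (1 / Gamma a) * tail_loss a (x / th') (Digamma a)) \<partial>lborel) \<noteq> \<infinity>"
    using tail_risk_finite[OF a th] unfolding tail_risk_def by (simp add: less_top)
  show "ennreal (gdens a th x) * (ennreal (1 / Gamma a) * tail_loss a (x / th') (Digamma a))
      \<le> ennreal (gdens a th x) * (ennreal (1 / Gamma a) * tail_loss a (x / th') c)" for x
    using tail_loss_Digamma_less[OF a c] by (intro mult_left_mono) (auto intro: less_imp_le)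
  show "ennreal (gdens a th x) * (ennreal (1 / Gamma a) * tail_loss a (x / th') (Digamma a))
      < ennreal (gdens a th x) * (ennreal (1 / Gamma a) * tail_loss a (x / th') c)" if "x \<in> {0<..<1}" for x
    using that gdens_pos[OF a th, of x] a
    by (intro ennreal_mult_strict_left_mono tail_loss_Digamma_less[OF a c]) auto
qed auto

lemma risk_delta_Digamma_less:
  assumes a: "a > 0" and th1: "th1 > 0" and th2: "th2 > 0" and c: "c < Digamma a"
  shows "risk a th1 th2 (delta (Digamma a)) < risk a th1 th2 (delta c)"
proof -
  have "tail_risk a th2 th1 (Digamma a) + tail_risk a th1 th2 (Digamma a)
      < tail_risk a th2 th1 c + tail_risk a th1 th2 (Digamma a)"
    using tail_risk_Digamma_less[OF a th2 c] tail_risk_finite[OF a th1]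
    by (simp add: ennreal_add_left_cancel_less add.commute[of _ "tail_risk a th1 th2 (Digamma a)"] less_top)
  also have "\<dots> \<le> tail_risk a th2 th1 c + tail_risk a th1 th2 c"
    by (intro add_left_mono tail_risk_Digamma_le[OF a c])
  finally show ?thesis by (simp add: risk_delta_eq_tail_risk[OF a th1 th2])
qed

lemma dominates_delta_Digamma:
  assumes a: "a > 0" and c: "c < Digamma a"
  shows "dominates a (delta (Digamma a)) (delta c)"
  unfolding dominates_def
proof (intro conjI allI impI)
  show "risk a th1 th2 (delta (Digamma a)) \<le> risk a th1 th2 (delta c)" if "th1 > 0" "th2 > 0" for th1 th2
    using risk_delta_Digamma_less[OF a that c] by simp
  show "\<exists>th1>0. \<exists>th2>0. risk a th1 th2 (delta (Digamma a)) < risk a th1 th2 (delta c)"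
    using risk_delta_Digamma_less[OF a _ _ c, of 1 1] by (intro exI[of _ "1::real"] conjI) auto
qed

section \<open>The risk in terms of the ratio \<open>Z1 / Z2\<close>\<close>

lemma gamma_kernel_mult_gamma_kernel:
  assumes u: "u > 0" and v: "v > 0" and s: "s > 0"
  shows "gamma_kernel a (u * s) * gamma_kernel a (v * s) * s
    = (u * v) powr (a - 1) * (u + v) powr (1 - 2 * a) * gamma_kernel (2 * a) ((u + v) * s)"
proof -
  have s_pow: "s powr (a - 1) * s powr (a - 1) * s = s powr (2 * a - 1)"
    using s powr_add[of s "a - 1" "a - 1"] powr_add[of s "2 * a - 2" 1] by simp
  have uv_pow: "(u + v) powr (1 - 2 * a) * (u + v) powr (2 * a - 1) = 1"
    using u v by (simp add: powr_add[symmetric])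
  have "gamma_kernel a (u * s) * gamma_kernel a (v * s) * s
      = (u powr (a - 1) * v powr (a - 1)) * (s powr (a - 1) * s powr (a - 1) * s)
        * (exp (- (u * s)) * exp (- (v * s)))"
    using u v s by (simp add: gamma_kernel_def powr_mult mult_ac)
  also have "\<dots> = (u powr (a - 1) * v powr (a - 1))
      * ((u + v) powr (1 - 2 * a) * (u + v) powr (2 * a - 1)) * s powr (2 * a - 1) * exp (- ((u + v) * s))"
    unfolding s_pow uv_pow by (simp add: exp_add[symmetric] algebra_simps)
  also have "\<dots> = (u * v) powr (a - 1) * (u + v) powr (1 - 2 * a) * gamma_kernel (2 * a) ((u + v) * s)"
    using u v s by (simp add: gamma_kernel_def powr_mult mult_ac)
  finally show ?thesis .
qed

text \<open>In the coordinates \<open>(r * s, s)\<close>, with the smaller observation having scale \<open>th\<close> and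
  the larger one scale \<open>th'\<close>, the integrand is a gamma kernel of shape \<open>2 * a\<close> in
  \<open>(r / th + 1 / th') * s\<close>. Hence \<open>ratio_weight\<close> is the joint density of the ratio \<open>r\<close> and of
  this ordering, and \<open>ratio_mean\<close> is the conditional mean of \<open>ln Z2 - ln th'\<close> given both.\<close>

definition ratio_weight :: "real \<Rightarrow> real \<Rightarrow> real \<Rightarrow> real \<Rightarrow> real" where
  "ratio_weight a th th' r = (r / th * (1 / th')) powr (a - 1) * (r / th + 1 / th') powr (- 2 * a)
     * Gamma (2 * a) / ((Gamma a)\<^sup>2 * th * th')"

definition ratio_mean :: "real \<Rightarrow> real \<Rightarrow> real \<Rightarrow> real \<Rightarrow> real" where
  "ratio_mean a th th' r = Digamma (2 * a) - ln (r / th + 1 / th') - ln th'"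

definition ratio_loss :: "real \<Rightarrow> real \<Rightarrow> real \<Rightarrow> real \<Rightarrow> real \<Rightarrow> real" where
  "ratio_loss a th1 th2 r t =
     ratio_weight a th1 th2 r * ((ratio_mean a th1 th2 r - t)\<^sup>2 + ln_gamma_variance (2 * a))
   + ratio_weight a th2 th1 r * ((ratio_mean a th2 th1 r - t)\<^sup>2 + ln_gamma_variance (2 * a))"

lemma ratio_weight_nonneg: "a > 0 \<Longrightarrow> th > 0 \<Longrightarrow> th' > 0 \<Longrightarrow> ratio_weight a th th' r \<ge> 0"
  unfolding ratio_weight_def by (auto intro!: mult_nonneg_nonneg divide_nonneg_nonneg less_imp_le)

lemma ratio_weight_pos:
  assumes "a > 0" "th > 0" "th' > 0" "r > 0"
  shows "ratio_weight a th th' r > 0"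
proof -
  have "r / th + 1 / th' > 0" using assms by (simp add: add_pos_pos)
  moreover have "Gamma a \<noteq> 0" using Gamma_real_pos[OF assms(1)] by simp
  ultimately show ?thesis
    unfolding ratio_weight_def using assms by (intro mult_pos_pos divide_pos_pos) simp_all
qed

lemma ratio_loss_nonneg: "a > 0 \<Longrightarrow> th1 > 0 \<Longrightarrow> th2 > 0 \<Longrightarrow> ratio_loss a th1 th2 r t \<ge> 0"
  unfolding ratio_loss_def using ratio_weight_nonneg[of a] ln_gamma_variance_nonneg[of "2 * a"] by simp

lemma nn_integral_ratio_fibre:
  assumes a: "a > 0" and th: "th > 0" and th': "th' > 0" and r: "r > 0"
  shows "(\<integral>\<^sup>+s. ennreal s * ennreal ((ln s - ln th' - t)\<^sup>2 * gdens a th (r * s) * gdens a th' s) \<partial>lborel)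
    = ennreal (ratio_weight a th th' r * ((ratio_mean a th th' r - t)\<^sup>2 + ln_gamma_variance (2 * a)))"
proof -
  define u where "u = r / th"
  define v where "v = 1 / th'"
  have u: "u > 0" and v: "v > 0" using r th th' by (simp_all add: u_def v_def)
  define K where "K = (u * v) powr (a - 1) * (u + v) powr (1 - 2 * a) / ((Gamma a)\<^sup>2 * th * th')"
  have K: "K \<ge> 0" unfolding K_def using th th' by simp
  have "(\<integral>\<^sup>+s. ennreal s * ennreal ((ln s - ln th' - t)\<^sup>2 * gdens a th (r * s) * gdens a th' s) \<partial>lborel)
      = (\<integral>\<^sup>+s. ennreal K * ennreal (gamma_kernel (2 * a) ((u + v) * s) * (ln s - (ln th' + t))\<^sup>2) \<partial>lborel)"
  proof (rule nn_integral_cong)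
    fix s :: real
    show "ennreal s * ennreal ((ln s - ln th' - t)\<^sup>2 * gdens a th (r * s) * gdens a th' s)
        = ennreal K * ennreal (gamma_kernel (2 * a) ((u + v) * s) * (ln s - (ln th' + t))\<^sup>2)"
    proof (cases "s > 0")
      case True
      have "s * ((ln s - ln th' - t)\<^sup>2 * gdens a th (r * s) * gdens a th' s)
          = (ln s - (ln th' + t))\<^sup>2 * (gamma_kernel a (u * s) * gamma_kernel a (v * s) * s) / ((Gamma a)\<^sup>2 * th * th')"
        using th th' by (simp add: gdens_eq_gamma_kernel u_def v_def power2_eq_square field_simps)
      also have "\<dots> = K * (gamma_kernel (2 * a) ((u + v) * s) * (ln s - (ln th' + t))\<^sup>2)"
        unfolding gamma_kernel_mult_gamma_kernel[OF u v True] K_def by (simp add: field_simps)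
      finally show ?thesis
        using True K a th th' gdens_nonneg[of a th] gdens_nonneg[of a th']
        by (simp add: ennreal_mult'[symmetric] gamma_kernel_nonneg)
    next
      case False
      then have "(u + v) * s \<le> 0" using u v by (simp add: mult_nonneg_nonpos)
      then show ?thesis using False by (simp add: gamma_kernel_def ennreal_neg)
    qed
  qed
  also have "\<dots> = ennreal K * ennreal (Gamma (2 * a)
      * ((Digamma (2 * a) - ln (u + v) - (ln th' + t))\<^sup>2 + ln_gamma_variance (2 * a)) / (u + v))"
    using a u v by (subst nn_integral_cmult) (auto simp: nn_integral_gamma_kernel_scaled_ln_deviation)
  also have "\<dots> = ennreal (ratio_weight a th th' r * ((ratio_mean a th th' r - t)\<^sup>2 + ln_gamma_variance (2 * a)))"
  proof -
    have "(u + v) powr (- 2 * a) = (u + v) powr (1 - 2 * a) / (u + v)"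
      using u v powr_diff[of "u + v" "1 - 2 * a" 1] by simp
    then have weight: "ratio_weight a th th' r = K * Gamma (2 * a) / (u + v)"
      unfolding ratio_weight_def u_def[symmetric] v_def[symmetric] K_def by simp
    have mean: "ratio_mean a th th' r - t = Digamma (2 * a) - ln (u + v) - (ln th' + t)"
      by (simp add: ratio_mean_def u_def v_def)
    have "K * (Gamma (2 * a) * ((Digamma (2 * a) - ln (u + v) - (ln th' + t))\<^sup>2
          + ln_gamma_variance (2 * a)) / (u + v))
        = ratio_weight a th th' r * ((ratio_mean a th th' r - t)\<^sup>2 + ln_gamma_variance (2 * a))"
      unfolding weight mean by simp
    moreover have "ln_gamma_variance (2 * a) \<ge> 0" using a by (simp add: ln_gamma_variance_nonneg)
    ultimately show ?thesis using K a u v by (simp add: ennreal_mult'[symmetric])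
  qed
  finally show ?thesis .
qed

lemma HS_measurable [measurable]: "(\<lambda>p. HS th1 th2 (fst p) (snd p)) \<in> borel_measurable (lborel \<Otimes>\<^sub>M lborel)"
  unfolding HS_def by measurable

lemma risk_eq_ratio_integral:
  assumes a: "a > 0" and th1: "th1 > 0" and th2: "th2 > 0"
    and [measurable]: "(\<lambda>p. d (fst p) (snd p)) \<in> borel_measurable (lborel \<Otimes>\<^sub>M lborel)"
    and d: "\<And>r s. 0 < r \<Longrightarrow> r < 1 \<Longrightarrow> 0 < s \<Longrightarrow> d (r * s) s = ln s - \<phi> r \<and> d s (r * s) = ln s - \<phi> r"
  shows "risk a th1 th2 d = (\<integral>\<^sup>+r. indicator {0<..<1} r * ennreal (ratio_loss a th1 th2 r (\<phi> r)) \<partial>lborel)"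
proof -
  define F where "F p = ennreal ((d (fst p) (snd p) - HS th1 th2 (fst p) (snd p))\<^sup>2
      * gdens a th1 (fst p) * gdens a th2 (snd p))" for p
  have "risk a th1 th2 d = (\<integral>\<^sup>+r. indicator {0<..<1} r
      * ((\<integral>\<^sup>+s. ennreal s * F (r * s, s) \<partial>lborel) + (\<integral>\<^sup>+s. ennreal s * F (s, r * s) \<partial>lborel)) \<partial>lborel)"
    unfolding risk_def F_def[symmetric]
    by (rule nn_integral_pair_ratio) (auto simp: F_def gdens_nonpos)
  also have "\<dots> = (\<integral>\<^sup>+r. indicator {0<..<1} r * ennreal (ratio_loss a th1 th2 r (\<phi> r)) \<partial>lborel)"
  proof (rule nn_integral_cong)
    fix r :: real
    show "indicator {0<..<1} r
        * ((\<integral>\<^sup>+s. ennreal s * F (r * s, s) \<partial>lborel) + (\<integral>\<^sup>+s. ennreal s * F (s, r * s) \<partial>lborel))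
      = indicator {0<..<1} r * ennreal (ratio_loss a th1 th2 r (\<phi> r))"
    proof (cases "r \<in> {0<..<1}")
      case True
      then have r: "0 < r" "r < 1" by auto
      have "ennreal s * F (r * s, s)
          = ennreal s * ennreal ((ln s - ln th2 - \<phi> r)\<^sup>2 * gdens a th1 (r * s) * gdens a th2 s)" for s
      proof (cases "s > 0")
        case True
        then have "d (r * s) s - HS th1 th2 (r * s) s = ln s - ln th2 - \<phi> r"
          using d[OF r True] r by (simp add: HS_def)
        then show ?thesis by (simp add: F_def)
      qed (simp add: ennreal_neg)
      then have I1: "(\<integral>\<^sup>+s. ennreal s * F (r * s, s) \<partial>lborel)
          = ennreal (ratio_weight a th1 th2 r * ((ratio_mean a th1 th2 r - \<phi> r)\<^sup>2 + ln_gamma_variance (2 * a)))"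
        by (simp only: nn_integral_ratio_fibre[OF a th1 th2 r(1)])
      have "ennreal s * F (s, r * s)
          = ennreal s * ennreal ((ln s - ln th1 - \<phi> r)\<^sup>2 * gdens a th2 (r * s) * gdens a th1 s)" for s
      proof (cases "s > 0")
        case True
        then have "d s (r * s) - HS th1 th2 s (r * s) = ln s - ln th1 - \<phi> r"
          using d[OF r True] r by (simp add: HS_def)
        then show ?thesis by (simp add: F_def mult_ac)
      qed (simp add: ennreal_neg)
      then have I2: "(\<integral>\<^sup>+s. ennreal s * F (s, r * s) \<partial>lborel)
          = ennreal (ratio_weight a th2 th1 r * ((ratio_mean a th2 th1 r - \<phi> r)\<^sup>2 + ln_gamma_variance (2 * a)))"
        by (simp only: nn_integral_ratio_fibre[OF a th2 th1 r(1)])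
      have "ln_gamma_variance (2 * a) \<ge> 0" using a by (simp add: ln_gamma_variance_nonneg)
      then show ?thesis
        unfolding I1 I2 ratio_loss_def
        using ratio_weight_nonneg[OF a th1 th2] ratio_weight_nonneg[OF a th2 th1]
        by (subst ennreal_plus[symmetric]) auto
    qed simp
  qed
  finally show ?thesis .
qed

section \<open>Domination by the shrinkage estimator\<close>

lemma ratio_weight_swap_le:
  assumes a: "a > 0" and th1: "th1 > 0" and le: "th1 \<le> th2" and r: "0 < r" "r < 1"
  shows "ratio_weight a th2 th1 r \<le> ratio_weight a th1 th2 r"
proof -
  have k: "r / th1 + 1 / th2 > 0" using th1 le r by (simp add: add_pos_pos)
  have "0 \<le> (1 - r) * (1 / th1 - 1 / th2)"
    using r le th1 by (intro mult_nonneg_nonneg) (auto simp: frac_le)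
  also have "\<dots> = (r / th2 + 1 / th1) - (r / th1 + 1 / th2)"
    using th1 le by (simp add: field_simps)
  finally have "r / th1 + 1 / th2 \<le> r / th2 + 1 / th1" by simp
  then have "(r / th2 + 1 / th1) powr (- 2 * a) \<le> (r / th1 + 1 / th2) powr (- 2 * a)"
    using k a by (intro powr_mono2') auto
  moreover define C where "C = (r / th1 * (1 / th2)) powr (a - 1) * Gamma (2 * a) / ((Gamma a)\<^sup>2 * th1 * th2)"
  have "Gamma (2 * a) > 0" using a by (simp add: Gamma_real_pos)
  then have "C \<ge> 0"
    unfolding C_def using th1 le by (auto intro!: divide_nonneg_nonneg mult_nonneg_nonneg)
  moreover have "ratio_weight a th1 th2 r = C * (r / th1 + 1 / th2) powr (- 2 * a)"
    "ratio_weight a th2 th1 r = C * (r / th2 + 1 / th1) powr (- 2 * a)"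
    unfolding ratio_weight_def C_def by (simp_all add: mult_ac)
  ultimately show ?thesis by (simp add: mult_left_mono)
qed

lemma ratio_mean_eq:
  assumes "th > 0" "th' > 0" "r > 0"
  shows "ratio_mean a th th' r = Digamma (2 * a) - ln (1 + r * (th' / th))"
proof -
  have pos: "r / th + 1 / th' > 0" using assms by (simp add: add_pos_pos)
  have "ln (r / th + 1 / th') + ln th' = ln ((r / th + 1 / th') * th')"
    using ln_mult_pos[OF pos assms(2)] by simp
  also have "(r / th + 1 / th') * th' = 1 + r * (th' / th)" using assms by (simp add: field_simps)
  finally show ?thesis by (simp add: ratio_mean_def algebra_simps)
qed

lemma ratio_mean_swap_le:
  assumes th1: "th1 > 0" and le: "th1 \<le> th2" and r: "r > 0"
  shows "ratio_mean a th1 th2 r \<le> ratio_mean a th2 th1 r"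
proof -
  have "th1 / th2 \<le> th2 / th1"
    using th1 le by (simp add: divide_simps) (simp add: mult_mono)
  then have "r * (th1 / th2) \<le> r * (th2 / th1)" using r by (intro mult_left_mono) auto
  then have "1 + r * (th1 / th2) \<le> 1 + r * (th2 / th1)" by simp
  then show ?thesis
    using th1 le r by (simp add: ratio_mean_eq add_pos_nonneg)
qed

lemma ratio_mean_add_le:
  assumes th: "th > 0" and th': "th' > 0" and r: "r > 0"
  shows "ratio_mean a th th' r + ratio_mean a th' th r \<le> 2 * (Digamma (2 * a) - ln (1 + r))"
proof -
  have "th' / th + th / th' \<ge> 2"
  proof -
    have "th\<^sup>2 + th'\<^sup>2 \<ge> 2 * th * th'" using sum_squares_bound[of th th'] by simp
    then show ?thesis using th th' by (simp add: field_simps power2_eq_square)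
  qed
  then have "(1 + r)\<^sup>2 \<le> (1 + r * (th' / th)) * (1 + r * (th / th'))"
    using r th th' mult_left_mono[of 2 "th' / th + th / th'" r]
    by (simp add: power2_eq_square field_simps)
  then have "ln ((1 + r)\<^sup>2) \<le> ln ((1 + r * (th' / th)) * (1 + r * (th / th')))"
    using r th th' by (subst ln_le_cancel_iff) (auto intro!: add_pos_nonneg mult_pos_pos)
  then have "2 * ln (1 + r) \<le> ln (1 + r * (th' / th)) + ln (1 + r * (th / th'))"
    using r th th' by (simp add: ln_realpow ln_mult_pos add_pos_nonneg)
  then show ?thesis using th th' r by (simp add: ratio_mean_eq)
qed

lemma ratio_weights_means_oppositely_ordered:
  assumes a: "a > 0" and th1: "th1 > 0" and th2: "th2 > 0" and r: "0 < r" "r < 1"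
  shows "(ratio_weight a th1 th2 r - ratio_weight a th2 th1 r) * (ratio_mean a th1 th2 r - ratio_mean a th2 th1 r) \<le> 0"
proof (cases "th1 \<le> th2")
  case True
  then show ?thesis
    using ratio_weight_swap_le[OF a th1 True r] ratio_mean_swap_le[OF th1 True r(1)]
    by (simp add: mult_nonneg_nonpos)
next
  case False
  then have "th2 \<le> th1" by simp
  then show ?thesis
    using ratio_weight_swap_le[OF a th2 _ r] ratio_mean_swap_le[OF th2 _ r(1)]
    by (simp add: mult_nonpos_nonneg)
qed

text \<open>By Chebyshev's sum inequality the conditional mean of \<open>ln Z2 - H_S\<close> given the ratio
  \<open>r = Z1 / Z2\<close> is at most \<open>Digamma (2 * a) - ln (1 + r)\<close>, whatever the scales are.\<close>

lemma ratio_weighted_mean_le: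
  assumes a: "a > 0" and th1: "th1 > 0" and th2: "th2 > 0" and r: "0 < r" "r < 1"
  shows "ratio_weight a th1 th2 r * ratio_mean a th1 th2 r + ratio_weight a th2 th1 r * ratio_mean a th2 th1 r
    \<le> (ratio_weight a th1 th2 r + ratio_weight a th2 th1 r) * (Digamma (2 * a) - ln (1 + r))"
  using ratio_weight_nonneg[OF a th1 th2] ratio_weight_nonneg[OF a th2 th1]
    ratio_weights_means_oppositely_ordered[OF a th1 th2 r] ratio_mean_add_le[OF th1 th2 r(1)]
  by (intro weighted_sum_le_of_oppositely_ordered) auto

lemma ratio_loss_diff_ge:
  assumes a: "a > 0" and th1: "th1 > 0" and th2: "th2 > 0" and r: "0 < r" "r < 1"
    and c: "Digamma (2 * a) - ln (1 + r) \<le> c"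
  shows "(ratio_weight a th1 th2 r + ratio_weight a th2 th1 r) * (c - (Digamma (2 * a) - ln (1 + r)))\<^sup>2
    \<le> ratio_loss a th1 th2 r c - ratio_loss a th1 th2 r (Digamma (2 * a) - ln (1 + r))"
proof -
  define b where "b = Digamma (2 * a) - ln (1 + r)"
  define S where "S = ratio_weight a th1 th2 r + ratio_weight a th2 th1 r"
  define M where "M = ratio_weight a th1 th2 r * ratio_mean a th1 th2 r + ratio_weight a th2 th1 r * ratio_mean a th2 th1 r"
  have "ratio_loss a th1 th2 r c - ratio_loss a th1 th2 r b = (c - b) * (S * (c + b) - 2 * M)"
    unfolding ratio_loss_def S_def M_def by (simp add: power2_eq_square algebra_simps)
  moreover have "S * (c - b) \<le> S * (c + b) - 2 * M"
    using ratio_weighted_mean_le[OF a th1 th2 r] by (simp add: S_def M_def b_def algebra_simps)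
  then have "(c - b) * (S * (c - b)) \<le> (c - b) * (S * (c + b) - 2 * M)"
    using c by (intro mult_left_mono) (auto simp: b_def)
  ultimately have "S * (c - b)\<^sup>2 \<le> ratio_loss a th1 th2 r c - ratio_loss a th1 th2 r b"
    by (simp add: power2_eq_square mult_ac)
  then show ?thesis by (simp add: S_def b_def)
qed

lemma ratio_loss_shrink_le:
  assumes a: "a > 0" and th1: "th1 > 0" and th2: "th2 > 0" and r: "0 < r" "r < 1"
  shows "ratio_loss a th1 th2 r (min c (Digamma (2 * a) - ln (1 + r))) \<le> ratio_loss a th1 th2 r c"
proof (cases "Digamma (2 * a) - ln (1 + r) \<le> c")
  case True
  have "0 \<le> (ratio_weight a th1 th2 r + ratio_weight a th2 th1 r) * (c - (Digamma (2 * a) - ln (1 + r)))\<^sup>2"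
    using ratio_weight_nonneg[OF a th1 th2] ratio_weight_nonneg[OF a th2 th1] by simp
  then show ?thesis using ratio_loss_diff_ge[OF a th1 th2 r True] True by (simp add: min_def)
qed simp

lemma ratio_loss_shrink_less:
  assumes a: "a > 0" and th1: "th1 > 0" and th2: "th2 > 0" and r: "0 < r" "r < 1"
    and c: "Digamma (2 * a) - ln (1 + r) < c"
  shows "ratio_loss a th1 th2 r (min c (Digamma (2 * a) - ln (1 + r))) < ratio_loss a th1 th2 r c"
proof -
  have "0 < (ratio_weight a th1 th2 r + ratio_weight a th2 th1 r) * (c - (Digamma (2 * a) - ln (1 + r)))\<^sup>2"
    using c ratio_weight_pos[OF a th1 th2 r(1)] ratio_weight_pos[OF a th2 th1 r(1)] by simp
  then show ?thesis using ratio_loss_diff_ge[OF a th1 th2 r less_imp_le[OF c]] c by (simp add: min_def)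
qed

lemma delta_measurable [measurable]: "(\<lambda>p. delta c (fst p) (snd p)) \<in> borel_measurable (lborel \<Otimes>\<^sub>M lborel)"
  unfolding delta_def by measurable

lemma deltaS_measurable [measurable]: "(\<lambda>p. deltaS a c (fst p) (snd p)) \<in> borel_measurable (lborel \<Otimes>\<^sub>M lborel)"
  unfolding deltaS_def by measurable

lemma risk_delta_eq_ratio_integral:
  assumes "a > 0" "th1 > 0" "th2 > 0"
  shows "risk a th1 th2 (delta c) = (\<integral>\<^sup>+r. indicator {0<..<1} r * ennreal (ratio_loss a th1 th2 r c) \<partial>lborel)"
  by (rule risk_eq_ratio_integral[OF assms delta_measurable, where \<phi> = "\<lambda>_. c"])
    (auto simp: delta_def max_def)

text \<open>On the ratio \<open>r = Z1 / Z2\<close>, the shrinkage estimator replaces the constant \<open>c\<close> by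
  \<open>min c (Digamma (2 * a) - ln (1 + r))\<close>, since \<open>ln (X1 + X2) = ln Z2 + ln (1 + r)\<close>.\<close>

lemma deltaS_eq_min:
  assumes r: "0 < r" "r < 1" and s: "0 < s"
  shows "deltaS a c (r * s) s = ln s - min c (Digamma (2 * a) - ln (1 + r))
    \<and> deltaS a c s (r * s) = ln s - min c (Digamma (2 * a) - ln (1 + r))"
proof -
  have minmax: "min (r * s) s = r * s" "max (r * s) s = s" "min s (r * s) = r * s" "max s (r * s) = s"
    using r s by (auto simp: min_def max_def)
  have "ln (r * s + s) = ln s + ln (1 + r)" "ln (s + r * s) = ln s + ln (1 + r)"
    using r s ln_mult[of s "1 + r"] by (simp_all add: algebra_simps)
  moreover have "(r < exp (Digamma (2 * a) - c) - 1) \<longleftrightarrow> (ln (1 + r) < ln (exp (Digamma (2 * a) - c)))"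
    using r by (subst ln_less_cancel_iff) auto
  then have "(r < exp (Digamma (2 * a) - c) - 1) \<longleftrightarrow> (c < Digamma (2 * a) - ln (1 + r))"
    by auto
  ultimately show ?thesis using s unfolding deltaS_def minmax by (auto simp: min_def)
qed

lemma risk_deltaS_eq_ratio_integral:
  assumes "a > 0" "th1 > 0" "th2 > 0"
  shows "risk a th1 th2 (deltaS a c)
    = (\<integral>\<^sup>+r. indicator {0<..<1} r * ennreal (ratio_loss a th1 th2 r (min c (Digamma (2 * a) - ln (1 + r)))) \<partial>lborel)"
  by (rule risk_eq_ratio_integral[OF assms deltaS_measurable]) (rule deltaS_eq_min)

lemma risk_deltaS_le:
  assumes a: "a > 0" and th1: "th1 > 0" and th2: "th2 > 0"
  shows "risk a th1 th2 (deltaS a c) \<le> risk a th1 th2 (delta c)"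
  unfolding risk_deltaS_eq_ratio_integral[OF a th1 th2] risk_delta_eq_ratio_integral[OF a th1 th2]
  by (intro nn_integral_mono) (auto simp: indicator_def intro!: ennreal_leI ratio_loss_shrink_le[OF a th1 th2])

lemma risk_deltaS_less:
  assumes a: "a > 0" and th1: "th1 > 0" and th2: "th2 > 0" and c: "c > Digamma (2 * a) - ln 2"
  shows "risk a th1 th2 (deltaS a c) < risk a th1 th2 (delta c)"
  unfolding risk_deltaS_eq_ratio_integral[OF a th1 th2] risk_delta_eq_ratio_integral[OF a th1 th2]
proof (rule nn_integral_less_if_less_on_interval[of _ _ "max 0 (exp (Digamma (2 * a) - c) - 1)" 1])
  show "(\<integral>\<^sup>+r. indicator {0<..<1} r * ennreal (ratio_loss a th1 th2 r (min c (Digamma (2 * a) - ln (1 + r)))) \<partial>lborel) \<noteq> \<infinity>"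
    using risk_deltaS_le[OF a th1 th2, of c] risk_delta_finite[OF a th1 th2, of c]
    unfolding risk_deltaS_eq_ratio_integral[OF a th1 th2] by (auto simp: top_unique)
  show "indicator {0<..<1} r * ennreal (ratio_loss a th1 th2 r (min c (Digamma (2 * a) - ln (1 + r))))
      \<le> indicator {0<..<1} r * ennreal (ratio_loss a th1 th2 r c)" for r
    by (auto simp: indicator_def intro!: ennreal_leI ratio_loss_shrink_le[OF a th1 th2])
  show "indicator {0<..<1} r * ennreal (ratio_loss a th1 th2 r (min c (Digamma (2 * a) - ln (1 + r))))
      < indicator {0<..<1} r * ennreal (ratio_loss a th1 th2 r c)"
    if r: "r \<in> {max 0 (exp (Digamma (2 * a) - c) - 1)<..<1}" for r
  proof -
    have "exp (Digamma (2 * a) - c) < 1 + r" using r by auto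
    then have "ln (exp (Digamma (2 * a) - c)) < ln (1 + r)" using r by (subst ln_less_cancel_iff) auto
    then have less: "Digamma (2 * a) - ln (1 + r) < c" by simp
    show ?thesis
      using r ratio_loss_shrink_less[OF a th1 th2 _ _ less] ratio_loss_nonneg[OF a th1 th2]
      by (simp add: indicator_def ennreal_less_iff)
  qed
  have "exp (Digamma (2 * a) - c) < exp (ln 2)" using c by (simp only: exp_less_cancel_iff)
  then show "max 0 (exp (Digamma (2 * a) - c) - 1) < 1" by simp
qed (unfold ratio_loss_def ratio_weight_def ratio_mean_def, measurable)

lemma dominates_deltaS:
  assumes a: "a > 0" and c: "c > Digamma (2 * a) - ln 2"
  shows "dominates a (deltaS a c) (delta c)"
  unfolding dominates_def
proof (intro conjI allI impI)
  show "risk a th1 th2 (deltaS a c) \<le> risk a th1 th2 (delta c)" if "th1 > 0" "th2 > 0" for th1 th2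
    by (rule risk_deltaS_le[OF a that])
  show "\<exists>th1>0. \<exists>th2>0. risk a th1 th2 (deltaS a c) < risk a th1 th2 (delta c)"
    using risk_deltaS_less[OF a _ _ c, of 1 1] by (intro exI[of _ "1::real"] conjI) auto
qed

section \<open>The constant \<open>c2\<close>\<close>

definition joint_gdens :: "real \<Rightarrow> real \<Rightarrow> real \<Rightarrow> real \<times> real \<Rightarrow> real" where
  "joint_gdens a th1 th2 p = gdens a th1 (fst p) * gdens a th2 (snd p)"

definition log_error :: "real \<Rightarrow> real \<Rightarrow> real \<times> real \<Rightarrow> real" where
  "log_error th1 th2 p = ln (max (fst p) (snd p)) - HS th1 th2 (fst p) (snd p)"

lemma joint_gdens_measurable [measurable]: "joint_gdens a th1 th2 \<in> borel_measurable (lborel \<Otimes>\<^sub>M lborel)"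
  unfolding joint_gdens_def by measurable

lemma log_error_measurable [measurable]: "log_error th1 th2 \<in> borel_measurable (lborel \<Otimes>\<^sub>M lborel)"
  unfolding log_error_def by measurable

lemma joint_gdens_nonneg: "a > 0 \<Longrightarrow> th1 > 0 \<Longrightarrow> th2 > 0 \<Longrightarrow> joint_gdens a th1 th2 p \<ge> 0"
  unfolding joint_gdens_def by (intro mult_nonneg_nonneg gdens_nonneg)

lemma integrable_gdens: "a > 0 \<Longrightarrow> th > 0 \<Longrightarrow> integrable lborel (gdens a th)"
  by (intro integrableI_nonneg) (auto simp: gdens_nonneg nn_integral_gdens)

lemma has_bochner_integral_joint_gdens:
  assumes a: "a > 0" and th1: "th1 > 0" and th2: "th2 > 0"
  shows "has_bochner_integral (lborel \<Otimes>\<^sub>M lborel) (joint_gdens a th1 th2) 1"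
proof (rule has_bochner_integral_nn_integral)
  have "(\<integral>\<^sup>+p. ennreal (joint_gdens a th1 th2 p) \<partial>(lborel \<Otimes>\<^sub>M lborel))
      = (\<integral>\<^sup>+p. ennreal (gdens a th1 (fst p)) * ennreal (gdens a th2 (snd p)) \<partial>(lborel \<Otimes>\<^sub>M lborel))"
    unfolding joint_gdens_def using gdens_nonneg[OF a th1] gdens_nonneg[OF a th2] by (simp add: ennreal_mult)
  also have "\<dots> = 1"
    by (subst nn_integral_lborel_pair_mult) (auto simp: nn_integral_gdens a th1 th2)
  finally show "(\<integral>\<^sup>+p. ennreal (joint_gdens a th1 th2 p) \<partial>(lborel \<Otimes>\<^sub>M lborel)) = ennreal 1" by simp
qed (use joint_gdens_nonneg[OF a th1 th2] in auto)

lemma risk_delta_eq_log_error: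
  "risk a th1 th2 (delta t)
    = (\<integral>\<^sup>+p. ennreal ((log_error th1 th2 p - t)\<^sup>2 * joint_gdens a th1 th2 p) \<partial>(lborel \<Otimes>\<^sub>M lborel))"
  unfolding risk_def log_error_def joint_gdens_def delta_def
  by (intro nn_integral_cong) (simp add: algebra_simps)

lemma integrable_log_error_squared:
  assumes a: "a > 0" and th1: "th1 > 0" and th2: "th2 > 0"
  shows "integrable (lborel \<Otimes>\<^sub>M lborel) (\<lambda>p. (log_error th1 th2 p)\<^sup>2 * joint_gdens a th1 th2 p)"
proof (rule integrableI_nonneg)
  show "(\<integral>\<^sup>+p. ennreal ((log_error th1 th2 p)\<^sup>2 * joint_gdens a th1 th2 p) \<partial>(lborel \<Otimes>\<^sub>M lborel)) < \<infinity>"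
    using risk_delta_finite[OF a th1 th2, of 0] by (simp add: risk_delta_eq_log_error)
qed (use joint_gdens_nonneg[OF a th1 th2] in auto)

lemma integrable_log_error:
  assumes a: "a > 0" and th1: "th1 > 0" and th2: "th2 > 0"
  shows "integrable (lborel \<Otimes>\<^sub>M lborel) (\<lambda>p. log_error th1 th2 p * joint_gdens a th1 th2 p)"
proof (rule Bochner_Integration.integrable_bound)
  show "integrable (lborel \<Otimes>\<^sub>M lborel) (\<lambda>p. (log_error th1 th2 p)\<^sup>2 * joint_gdens a th1 th2 p + joint_gdens a th1 th2 p)"
    using has_bochner_integral_joint_gdens[OF a th1 th2]
    by (intro Bochner_Integration.integrable_add integrable_log_error_squared a th1 th2)
      (simp add: has_bochner_integral_iff)
  show "AE p in lborel \<Otimes>\<^sub>M lborel. norm (log_error th1 th2 p * joint_gdens a th1 th2 p)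
      \<le> norm ((log_error th1 th2 p)\<^sup>2 * joint_gdens a th1 th2 p + joint_gdens a th1 th2 p)"
  proof (intro AE_I2)
    fix p
    have "\<bar>log_error th1 th2 p\<bar> * joint_gdens a th1 th2 p \<le> ((log_error th1 th2 p)\<^sup>2 + 1) * joint_gdens a th1 th2 p"
      by (intro mult_right_mono abs_le_square_plus_one joint_gdens_nonneg a th1 th2)
    then show "norm (log_error th1 th2 p * joint_gdens a th1 th2 p)
        \<le> norm ((log_error th1 th2 p)\<^sup>2 * joint_gdens a th1 th2 p + joint_gdens a th1 th2 p)"
      using joint_gdens_nonneg[OF a th1 th2, of p] by (simp add: abs_mult algebra_simps)
  qed
qed measurable

lemma risk_delta_eq_quadratic:
  assumes a: "a > 0" and th1: "th1 > 0" and th2: "th2 > 0"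
  defines "E \<equiv> \<integral>p. log_error th1 th2 p * joint_gdens a th1 th2 p \<partial>(lborel \<Otimes>\<^sub>M lborel)"
    and "E2 \<equiv> \<integral>p. (log_error th1 th2 p)\<^sup>2 * joint_gdens a th1 th2 p \<partial>(lborel \<Otimes>\<^sub>M lborel)"
  shows "risk a th1 th2 (delta t) = ennreal (E2 - 2 * t * E + t\<^sup>2)" and "E2 - 2 * t * E + t\<^sup>2 \<ge> 0"
proof -
  have expand: "(log_error th1 th2 p - t)\<^sup>2 * joint_gdens a th1 th2 p
      = (log_error th1 th2 p)\<^sup>2 * joint_gdens a th1 th2 p - (2 * t) * (log_error th1 th2 p * joint_gdens a th1 th2 p)
        + t\<^sup>2 * joint_gdens a th1 th2 p" for p
    by (simp add: power2_eq_square algebra_simps)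
  have int: "integrable (lborel \<Otimes>\<^sub>M lborel) (\<lambda>p. (log_error th1 th2 p - t)\<^sup>2 * joint_gdens a th1 th2 p)"
    unfolding expand using has_bochner_integral_joint_gdens[OF a th1 th2]
    by (intro Bochner_Integration.integrable_add Bochner_Integration.integrable_diff
        Bochner_Integration.integrable_mult_right integrable_log_error_squared integrable_log_error a th1 th2)
      (simp add: has_bochner_integral_iff)
  have eq: "(\<integral>p. (log_error th1 th2 p - t)\<^sup>2 * joint_gdens a th1 th2 p \<partial>(lborel \<Otimes>\<^sub>M lborel)) = E2 - 2 * t * E + t\<^sup>2"
    unfolding expand E_def E2_def using has_bochner_integral_joint_gdens[OF a th1 th2]
      integrable_log_error_squared[OF a th1 th2] integrable_log_error[OF a th1 th2]
    by (simp add: has_bochner_integral_iff Bochner_Integration.integral_add Bochner_Integration.integral_diff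
        Bochner_Integration.integrable_diff Bochner_Integration.integrable_add)
  show "risk a th1 th2 (delta t) = ennreal (E2 - 2 * t * E + t\<^sup>2)"
    unfolding risk_delta_eq_log_error eq[symmetric]
    by (rule nn_integral_eq_integral[OF int]) (use joint_gdens_nonneg[OF a th1 th2] in auto)
  show "E2 - 2 * t * E + t\<^sup>2 \<ge> 0"
    unfolding eq[symmetric] using joint_gdens_nonneg[OF a th1 th2] by (intro integral_nonneg_AE AE_I2) simp
qed

lemma integral_gdens_scale:
  assumes th: "th > 0"
  shows "(\<integral>x. f (x / th) * gdens a th x \<partial>lborel) = (\<integral>y. f y * gdens a 1 y \<partial>lborel)"
proof -
  have "(\<integral>x. f (x / th) * gdens a th x \<partial>lborel)
      = \<bar>th\<bar> *\<^sub>R (\<integral>y. f ((0 + th * y) / th) * gdens a th (0 + th * y) \<partial>lborel)"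
    using th by (intro lborel_integral_real_affine) auto
  also have "\<dots> = (\<integral>y. f y * (th * gdens a th (th * y)) \<partial>lborel)"
    using th by (simp add: mult_ac)
  also have "\<dots> = (\<integral>y. f y * gdens a 1 y \<partial>lborel)"
    using th by (simp add: gdens_eq_gamma_kernel)
  finally show ?thesis .
qed

lemma integral_gdens_atMost_scale:
  assumes th: "th > 0"
  shows "(\<integral>x. indicator {..th * z} x * gdens a th x \<partial>lborel) = (\<integral>x. indicator {..z} x * gdens a 1 x \<partial>lborel)"
proof -
  have "indicator {..th * z} x = (indicator {..z} (x / th) :: real)" for x
    using th by (auto simp: indicator_def field_simps)
  then show ?thesis using integral_gdens_scale[OF th, of "indicator {..z}" a] by simp
qed

lemma integral_gdens_lessThan_scale:
  assumes th: "th > 0"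
  shows "(\<integral>x. indicator {..<th * z} x * gdens a th x \<partial>lborel) = (\<integral>x. indicator {..z} x * gdens a 1 x \<partial>lborel)"
proof -
  have "AE x in lborel. x \<noteq> th * z" by (rule AE_lborel_singleton)
  then have "(\<integral>x. indicator {..<th * z} x * gdens a th x \<partial>lborel) = (\<integral>x. indicator {..th * z} x * gdens a th x \<partial>lborel)"
    by (intro integral_cong_AE) (auto elim!: eventually_mono simp: indicator_def)
  then show ?thesis using integral_gdens_atMost_scale[OF th] by simp
qed

lemma integrable_ln_scaled_gdens:
  assumes a: "a > 0" and th: "th > 0"
  shows "integrable lborel (\<lambda>x. ln (x / th) * gdens a th x)"
proof -
  have "integrable lborel (\<lambda>x. gamma_kernel a (0 + 1 / th * x) * ln (0 + 1 / th * x))"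
    using th integrable_gamma_kernel_ln[OF a] by (subst lborel_integrable_real_affine_iff) auto
  then have "integrable lborel (\<lambda>x. gamma_kernel a (x / th) * ln (x / th) / (Gamma a * th))" by simp
  then show ?thesis using th by (simp add: gdens_eq_gamma_kernel mult_ac)
qed

lemma c2_eq_integral:
  assumes a: "a > 0"
  shows "c2 a = 2 * (\<integral>y. ln y * gdens a 1 y * (\<integral>x. indicator {..y} x * gdens a 1 x \<partial>lborel) \<partial>lborel)"
proof -
  have "gcdf a z = (\<integral>x. indicator {..z} x * gdens a 1 x \<partial>lborel)" if "z > 0" for z
  proof -
    have "gcdf a z = (LBINT t:{0..z}. gdens a 1 t)"
      unfolding gcdf_def using interval_integral_Icc[of 0 z] that by (simp add: zero_ereal_def)
    also have "\<dots> = (\<integral>x. indicator {..z} x * gdens a 1 x \<partial>lborel)"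
      unfolding set_lebesgue_integral_def
      by (intro Bochner_Integration.integral_cong refl) (auto simp: indicator_def gdens_def)
    finally show ?thesis .
  qed
  then show ?thesis
    unfolding c2_def set_lebesgue_integral_def
    by (auto intro!: arg_cong[where f = "(*) 2"] Bochner_Integration.integral_cong simp: indicator_def gdens_nonpos)
qed

lemma has_bochner_integral_ln_scaled_max_fst:
  assumes a: "a > 0" and th1: "th1 > 0" and th2: "th2 > 0"
  shows "has_bochner_integral (lborel \<Otimes>\<^sub>M lborel) (\<lambda>p. (if snd p / th2 \<le> fst p / th1 then ln (fst p / th1) * joint_gdens a th1 th2 p else 0))
    (\<integral>y. ln y * gdens a 1 y * (\<integral>x. indicator {..y} x * gdens a 1 x \<partial>lborel) \<partial>lborel)"
proof -
  have int: "integrable (lborel \<Otimes>\<^sub>M lborel) (\<lambda>p. (if snd p / th2 \<le> fst p / th1 then ln (fst p / th1) * joint_gdens a th1 th2 p else 0))"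
  proof (rule Bochner_Integration.integrable_bound)
    show "integrable (lborel \<Otimes>\<^sub>M lborel) (\<lambda>p. ln (fst p / th1) * gdens a th1 (fst p) * gdens a th2 (snd p))"
      by (rule integrable_lborel_pair_mult[OF integrable_ln_scaled_gdens[OF a th1] integrable_gdens[OF a th2]])
    show "AE p in lborel \<Otimes>\<^sub>M lborel. norm (if snd p / th2 \<le> fst p / th1 then ln (fst p / th1) * joint_gdens a th1 th2 p else 0)
        \<le> norm (ln (fst p / th1) * gdens a th1 (fst p) * gdens a th2 (snd p))"
      by (intro AE_I2) (auto simp: joint_gdens_def)
  qed measurable
  have "(\<integral>p. (if snd p / th2 \<le> fst p / th1 then ln (fst p / th1) * joint_gdens a th1 th2 p else 0) \<partial>(lborel \<Otimes>\<^sub>M lborel))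
      = (\<integral>x1. \<integral>x2. (if x2 / th2 \<le> x1 / th1 then ln (x1 / th1) * joint_gdens a th1 th2 (x1, x2) else 0) \<partial>lborel \<partial>lborel)"
    using lborel_pair.integral_fst'[OF int] by (simp only: prod.sel)
  also have "\<dots> = (\<integral>x1. ln (x1 / th1) * gdens a th1 x1
      * (\<integral>x2. indicator {..th2 * (x1 / th1)} x2 * gdens a th2 x2 \<partial>lborel) \<partial>lborel)"
  proof (intro Bochner_Integration.integral_cong refl)
    fix x1 :: real
    have "(x2 / th2 \<le> x1 / th1) = (x2 \<le> th2 * (x1 / th1))" for x2 using th2 by (simp add: field_simps)
    then have "(\<integral>x2. (if x2 / th2 \<le> x1 / th1 then ln (x1 / th1) * joint_gdens a th1 th2 (x1, x2) else 0) \<partial>lborel)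
        = (\<integral>x2. ln (x1 / th1) * gdens a th1 x1 * (indicator {..th2 * (x1 / th1)} x2 * gdens a th2 x2) \<partial>lborel)"
      by (intro Bochner_Integration.integral_cong) (auto simp: joint_gdens_def indicator_def)
    also have "\<dots> = ln (x1 / th1) * gdens a th1 x1 * (\<integral>x2. indicator {..th2 * (x1 / th1)} x2 * gdens a th2 x2 \<partial>lborel)"
      by (rule integral_mult_right_zero)
    finally show "(\<integral>x2. (if x2 / th2 \<le> x1 / th1 then ln (x1 / th1) * joint_gdens a th1 th2 (x1, x2) else 0) \<partial>lborel)
        = ln (x1 / th1) * gdens a th1 x1 * (\<integral>x2. indicator {..th2 * (x1 / th1)} x2 * gdens a th2 x2 \<partial>lborel)" .
  qed
  also have "\<dots> = (\<integral>x1. ln (x1 / th1) * gdens a th1 x1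
      * (\<integral>x. indicator {..x1 / th1} x * gdens a 1 x \<partial>lborel) \<partial>lborel)"
    by (simp only: integral_gdens_atMost_scale[OF th2])
  also have "\<dots> = (\<integral>y. ln y * gdens a 1 y * (\<integral>x. indicator {..y} x * gdens a 1 x \<partial>lborel) \<partial>lborel)"
    using integral_gdens_scale[OF th1, of "\<lambda>y. ln y * (\<integral>x. indicator {..y} x * gdens a 1 x \<partial>lborel)" a]
    by (simp add: mult_ac)
  finally show ?thesis using int by (simp add: has_bochner_integral_iff)
qed

lemma has_bochner_integral_ln_scaled_max_snd:
  assumes a: "a > 0" and th1: "th1 > 0" and th2: "th2 > 0"
  shows "has_bochner_integral (lborel \<Otimes>\<^sub>M lborel) (\<lambda>p. (if fst p / th1 < snd p / th2 then ln (snd p / th2) * joint_gdens a th1 th2 p else 0))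
    (\<integral>y. ln y * gdens a 1 y * (\<integral>x. indicator {..y} x * gdens a 1 x \<partial>lborel) \<partial>lborel)"
proof -
  define G where "G p = (if fst p / th1 < snd p / th2 then ln (snd p / th2) * joint_gdens a th1 th2 p else 0)" for p
  have int: "integrable (lborel \<Otimes>\<^sub>M lborel) G"
  proof (rule Bochner_Integration.integrable_bound)
    show "integrable (lborel \<Otimes>\<^sub>M lborel) (\<lambda>p. gdens a th1 (fst p) * (ln (snd p / th2) * gdens a th2 (snd p)))"
      by (rule integrable_lborel_pair_mult[OF integrable_gdens[OF a th1] integrable_ln_scaled_gdens[OF a th2]])
    show "AE p in lborel \<Otimes>\<^sub>M lborel. norm (G p) \<le> norm (gdens a th1 (fst p) * (ln (snd p / th2) * gdens a th2 (snd p)))"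
      by (intro AE_I2) (auto simp: G_def joint_gdens_def mult_ac)
  qed (unfold G_def, measurable)
  have "integral\<^sup>L (lborel \<Otimes>\<^sub>M lborel) G = (\<integral>x2. \<integral>x1. G (x1, x2) \<partial>lborel \<partial>lborel)"
    using lborel_pair.integral_snd[of "\<lambda>x1 x2. G (x1, x2)"] int by simp
  also have "\<dots> = (\<integral>x2. ln (x2 / th2) * gdens a th2 x2
      * (\<integral>x1. indicator {..<th1 * (x2 / th2)} x1 * gdens a th1 x1 \<partial>lborel) \<partial>lborel)"
  proof (intro Bochner_Integration.integral_cong refl)
    fix x2 :: real
    have "(x1 / th1 < x2 / th2) = (x1 < th1 * (x2 / th2))" for x1 using th1 by (simp add: field_simps)
    then have "(\<integral>x1. G (x1, x2) \<partial>lborel)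
        = (\<integral>x1. ln (x2 / th2) * gdens a th2 x2 * (indicator {..<th1 * (x2 / th2)} x1 * gdens a th1 x1) \<partial>lborel)"
      by (intro Bochner_Integration.integral_cong) (auto simp: G_def joint_gdens_def indicator_def)
    also have "\<dots> = ln (x2 / th2) * gdens a th2 x2 * (\<integral>x1. indicator {..<th1 * (x2 / th2)} x1 * gdens a th1 x1 \<partial>lborel)"
      by (rule integral_mult_right_zero)
    finally show "(\<integral>x1. G (x1, x2) \<partial>lborel)
        = ln (x2 / th2) * gdens a th2 x2 * (\<integral>x1. indicator {..<th1 * (x2 / th2)} x1 * gdens a th1 x1 \<partial>lborel)" .
  qed
  also have "\<dots> = (\<integral>x2. ln (x2 / th2) * gdens a th2 x2
      * (\<integral>x. indicator {..x2 / th2} x * gdens a 1 x \<partial>lborel) \<partial>lborel)"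
    by (simp only: integral_gdens_lessThan_scale[OF th1])
  also have "\<dots> = (\<integral>y. ln y * gdens a 1 y * (\<integral>x. indicator {..y} x * gdens a 1 x \<partial>lborel) \<partial>lborel)"
    using integral_gdens_scale[OF th2, of "\<lambda>y. ln y * (\<integral>x. indicator {..y} x * gdens a 1 x \<partial>lborel)" a]
    by (simp add: mult_ac)
  finally show ?thesis using int unfolding G_def by (simp add: has_bochner_integral_iff)
qed

text \<open>The distribution of \<open>(X1 / th1, X2 / th2)\<close> does not depend on the scales, and
  \<open>c2 a\<close> is the mean of the logarithm of the maximum of two independent standard gamma variables.\<close>

lemma has_bochner_integral_ln_scaled_max:
  assumes a: "a > 0" and th1: "th1 > 0" and th2: "th2 > 0"
  shows "has_bochner_integral (lborel \<Otimes>\<^sub>M lborel) (\<lambda>p. ln (max (fst p / th1) (snd p / th2)) * joint_gdens a th1 th2 p) (c2 a)"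
proof -
  have "(\<lambda>p. ln (max (fst p / th1) (snd p / th2)) * joint_gdens a th1 th2 p)
      = (\<lambda>p. (if snd p / th2 \<le> fst p / th1 then ln (fst p / th1) * joint_gdens a th1 th2 p else 0)
          + (if fst p / th1 < snd p / th2 then ln (snd p / th2) * joint_gdens a th1 th2 p else 0))"
    by (auto simp: max_def)
  then show ?thesis
    using has_bochner_integral_add[OF has_bochner_integral_ln_scaled_max_fst[OF a th1 th2]
        has_bochner_integral_ln_scaled_max_snd[OF a th1 th2]]
    by (simp add: c2_eq_integral[OF a])
qed

lemma log_error_le_ln_scaled_max:
  assumes "x1 > 0" "x2 > 0" "th1 > 0" "th2 > 0"
  shows "log_error th1 th2 (x1, x2) \<le> ln (max (x1 / th1) (x2 / th2))"
proof -
  have "ln (x1 / th1) \<le> ln (max (x1 / th1) (x2 / th2))" using assms by (subst ln_le_cancel_iff) (auto simp: less_max_iff_disj)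
  moreover have "ln (x2 / th2) \<le> ln (max (x1 / th1) (x2 / th2))" using assms by (subst ln_le_cancel_iff) (auto simp: less_max_iff_disj)
  ultimately
  show ?thesis using assms by (cases "x2 \<le> x1") (simp_all add: log_error_def HS_def ln_div)
qed

lemma integral_log_error_le_c2:
  assumes a: "a > 0" and th1: "th1 > 0" and th2: "th2 > 0"
  shows "(\<integral>p. log_error th1 th2 p * joint_gdens a th1 th2 p \<partial>(lborel \<Otimes>\<^sub>M lborel)) \<le> c2 a"
proof -
  have "(\<integral>p. log_error th1 th2 p * joint_gdens a th1 th2 p \<partial>(lborel \<Otimes>\<^sub>M lborel))
      \<le> (\<integral>p. ln (max (fst p / th1) (snd p / th2)) * joint_gdens a th1 th2 p \<partial>(lborel \<Otimes>\<^sub>M lborel))"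
  proof (rule integral_mono[OF integrable_log_error[OF a th1 th2]])
    show "integrable (lborel \<Otimes>\<^sub>M lborel) (\<lambda>p. ln (max (fst p / th1) (snd p / th2)) * joint_gdens a th1 th2 p)"
      using has_bochner_integral_ln_scaled_max[OF a th1 th2] by (simp add: has_bochner_integral_iff)
    fix p :: "real \<times> real"
    show "log_error th1 th2 p * joint_gdens a th1 th2 p \<le> ln (max (fst p / th1) (snd p / th2)) * joint_gdens a th1 th2 p"
    proof (cases "fst p > 0 \<and> snd p > 0")
      case True
      then show ?thesis
        using log_error_le_ln_scaled_max[of "fst p" "snd p" th1 th2] th1 th2
        by (intro mult_right_mono joint_gdens_nonneg a) auto
    qed (auto simp: joint_gdens_def gdens_def)
  qed
  then show ?thesis using has_bochner_integral_ln_scaled_max[OF a th1 th2] by (simp add: has_bochner_integral_iff)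
qed

lemma integral_log_error_unit:
  assumes a: "a > 0"
  shows "(\<integral>p. log_error 1 1 p * joint_gdens a 1 1 p \<partial>(lborel \<Otimes>\<^sub>M lborel)) = c2 a"
  using has_bochner_integral_ln_scaled_max[OF a zero_less_one zero_less_one]
  by (simp add: has_bochner_integral_iff log_error_def HS_def)

lemma risk_delta_c2_le:
  assumes a: "a > 0" and th1: "th1 > 0" and th2: "th2 > 0" and c: "c \<ge> c2 a"
  shows "risk a th1 th2 (delta (c2 a)) \<le> risk a th1 th2 (delta c)"
proof -
  define E where "E = (\<integral>p. log_error th1 th2 p * joint_gdens a th1 th2 p \<partial>(lborel \<Otimes>\<^sub>M lborel))"
  have "(c - c2 a) * (2 * E) \<le> (c - c2 a) * (c + c2 a)"
    using integral_log_error_le_c2[OF a th1 th2] c by (intro mult_left_mono) (auto simp: E_def)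
  then show ?thesis
    unfolding risk_delta_eq_quadratic[OF a th1 th2] E_def[symmetric]
    by (intro ennreal_leI) (simp add: power2_eq_square algebra_simps)
qed

text \<open>For unit scales both orderings of the observations have the same weight, and
  \<open>ratio_density a\<close> is the density of \<open>Z1 / Z2\<close>.\<close>

definition ratio_density :: "real \<Rightarrow> real \<Rightarrow> real" where
  "ratio_density a r = indicator {0<..<1} r * (2 * ratio_weight a 1 1 r)"

lemma ratio_density_nonneg: "a > 0 \<Longrightarrow> ratio_density a r \<ge> 0"
  unfolding ratio_density_def using ratio_weight_nonneg[of a 1 1 r] by simp

lemma risk_delta_unit_eq:
  assumes a: "a > 0"
  shows "risk a 1 1 (delta t)
    = (\<integral>\<^sup>+r. ennreal (ratio_density a r * ((Digamma (2 * a) - ln (1 + r) - t)\<^sup>2 + ln_gamma_variance (2 * a))) \<partial>lborel)"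
  unfolding risk_delta_eq_ratio_integral[OF a zero_less_one zero_less_one]
  by (intro nn_integral_cong)
    (auto simp: ratio_density_def ratio_loss_def ratio_mean_def indicator_def add.commute algebra_simps)

text \<open>Comparing the two expressions for the risk of \<open>delta t\<close> at unit scales, as quadratics
  in \<open>t\<close>, identifies the first moment of the ratio representation with \<open>c2 a\<close>.\<close>

lemma ratio_density_moments:
  assumes a: "a > 0"
  defines "b \<equiv> \<lambda>r. Digamma (2 * a) - ln (1 + r)"
  shows "integrable lborel (ratio_density a)" "integrable lborel (\<lambda>r. ratio_density a r * b r)"
    and "integral\<^sup>L lborel (ratio_density a) = 1" "(\<integral>r. ratio_density a r * b r \<partial>lborel) = c2 a"
proof -
  define V where "V = ln_gamma_variance (2 * a)"
  define G where "G t r = ratio_density a r * ((b r - t)\<^sup>2 + V)" for t r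
  have V: "V \<ge> 0" unfolding V_def using a by (simp add: ln_gamma_variance_nonneg)
  have G_nonneg: "G t r \<ge> 0" for t r unfolding G_def using ratio_density_nonneg[OF a] V by simp
  have risk_G: "risk a 1 1 (delta t) = (\<integral>\<^sup>+r. ennreal (G t r) \<partial>lborel)" for t
    unfolding risk_delta_unit_eq[OF a] G_def b_def V_def ..
  have [measurable]: "ratio_density a \<in> borel_measurable borel" "b \<in> borel_measurable borel"
    unfolding ratio_density_def ratio_weight_def b_def by measurable
  have [measurable]: "G t \<in> borel_measurable borel" for t unfolding G_def by measurable
  have G: "integrable lborel (G t)" for t
  proof (rule integrableI_nonneg)
    show "(\<integral>\<^sup>+r. ennreal (G t r) \<partial>lborel) < \<infinity>"
      using risk_delta_finite[OF a zero_less_one zero_less_one, of t] by (simp add: risk_G)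
  qed (simp_all add: G_nonneg)
  have "ratio_density a = (\<lambda>r. (G 1 r + G (-1) r - 2 * G 0 r) / 2)"
    by (auto simp: fun_eq_iff G_def power2_eq_square algebra_simps)
  then show dens: "integrable lborel (ratio_density a)"
    by (simp add: G Bochner_Integration.integrable_add Bochner_Integration.integrable_diff)
  have "(\<lambda>r. ratio_density a r * b r) = (\<lambda>r. (G (-1) r - G 1 r) / 4)"
    by (auto simp: fun_eq_iff G_def power2_eq_square algebra_simps)
  then show dens_b: "integrable lborel (\<lambda>r. ratio_density a r * b r)"
    by (simp add: G Bochner_Integration.integrable_diff)
  have "integral\<^sup>L lborel (G t) = integral\<^sup>L lborel (G 0) - 2 * t * (\<integral>r. ratio_density a r * b r \<partial>lborel)
      + t\<^sup>2 * integral\<^sup>L lborel (ratio_density a)" for t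
  proof -
    have "G t = (\<lambda>r. G 0 r - 2 * t * (ratio_density a r * b r) + t\<^sup>2 * ratio_density a r)"
      by (auto simp: fun_eq_iff G_def power2_eq_square algebra_simps)
    then show ?thesis
      using G[of 0] dens dens_b by (simp add: Bochner_Integration.integral_add Bochner_Integration.integral_diff
          Bochner_Integration.integrable_add Bochner_Integration.integrable_diff)
  qed
  moreover obtain E2 where "risk a 1 1 (delta t) = ennreal (E2 - 2 * t * c2 a + t\<^sup>2)"
    and "E2 - 2 * t * c2 a + t\<^sup>2 \<ge> 0" for t
    using risk_delta_eq_quadratic[OF a zero_less_one zero_less_one] integral_log_error_unit[OF a] by metis
  moreover have "risk a 1 1 (delta t) = ennreal (integral\<^sup>L lborel (G t))" for t
    unfolding risk_G by (rule nn_integral_eq_integral[OF G]) (simp add: G_nonneg)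
  moreover have "integral\<^sup>L lborel (G t) \<ge> 0" for t by (simp add: G_nonneg)
  ultimately have "E2 - 2 * t * c2 a + t\<^sup>2 = integral\<^sup>L lborel (G 0) - 2 * t * (\<integral>r. ratio_density a r * b r \<partial>lborel)
      + t\<^sup>2 * integral\<^sup>L lborel (ratio_density a)" for t
    by (metis ennreal_inj)
  from quadratic_coefficients_eq[OF this]
  show "integral\<^sup>L lborel (ratio_density a) = 1" "(\<integral>r. ratio_density a r * b r \<partial>lborel) = c2 a" by simp_all
qed

lemma c2_gt_Digamma_double_minus_ln2:
  assumes a: "a > 0"
  shows "c2 a > Digamma (2 * a) - ln 2"
proof -
  define b where "b r = Digamma (2 * a) - ln (1 + r)" for r
  have "0 < (\<integral>r. ratio_density a r * b r - (Digamma (2 * a) - ln 2) * ratio_density a r \<partial>lborel)"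
  proof (rule integral_pos_if_pos_on_interval[of _ 0 1])
    show "integrable lborel (\<lambda>r. ratio_density a r * b r - (Digamma (2 * a) - ln 2) * ratio_density a r)"
      using ratio_density_moments(1,2)[OF a] by (simp add: b_def)
    show "0 \<le> ratio_density a r * b r - (Digamma (2 * a) - ln 2) * ratio_density a r" for r
    proof (cases "r \<in> {0<..<1}")
      case True
      then have "ln (1 + r) \<le> ln 2" by (subst ln_le_cancel_iff) auto
      then show ?thesis using ratio_density_nonneg[OF a, of r] by (simp add: b_def algebra_simps mult_left_mono)
    qed (simp add: ratio_density_def)
    show "0 < ratio_density a r * b r - (Digamma (2 * a) - ln 2) * ratio_density a r" if "r \<in> {0<..<1}" for r
    proof -
      have "ln (1 + r) < ln 2" using that by (subst ln_less_cancel_iff) auto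
      moreover have "ratio_density a r > 0"
        using that ratio_weight_pos[OF a zero_less_one zero_less_one, of r] by (simp add: ratio_density_def)
      ultimately show ?thesis by (simp add: b_def algebra_simps)
    qed
  qed simp
  also have "\<dots> = c2 a - (Digamma (2 * a) - ln 2)"
    using ratio_density_moments[OF a] by (simp add: b_def)
  finally show ?thesis by simp
qed

lemma dominates_deltaS_c2:
  assumes a: "a > 0" and c: "c \<ge> c2 a"
  shows "dominates a (deltaS a (c2 a)) (delta c)"
  unfolding dominates_def
proof (intro conjI allI impI)
  show "risk a th1 th2 (deltaS a (c2 a)) \<le> risk a th1 th2 (delta c)" if "th1 > 0" "th2 > 0" for th1 th2
    using risk_deltaS_le[OF a that] risk_delta_c2_le[OF a that c] by (rule order_trans)
  have "risk a 1 1 (deltaS a (c2 a)) < risk a 1 1 (delta c)"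
    using risk_deltaS_less[OF a zero_less_one zero_less_one c2_gt_Digamma_double_minus_ln2[OF a]]
      risk_delta_c2_le[OF a zero_less_one zero_less_one c] by (rule less_le_trans)
  then show "\<exists>th1>0. \<exists>th2>0. risk a th1 th2 (deltaS a (c2 a)) < risk a th1 th2 (delta c)"
    by (intro exI[of _ "1::real"] conjI) auto
qed

lemma ln_gt_Digamma_double_minus_ln2:
  assumes a: "(a :: real) > 0"
  shows "ln a > Digamma (2 * a) - ln 2"
  using Digamma_less_ln[of "2 * a"] a by (simp add: ln_mult)

theorem theorem2p3:
  fixes a :: real
  assumes "a > 0"
  shows "(\<forall>c. (c < c1 a \<or> c > Digamma (2 * a) - ln 2) \<longrightarrow> inadmissible a (delta c))
    \<and> (\<forall>c. c < c1 a \<longrightarrow> dominates a (delta (c1 a)) (delta c))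
    \<and> (\<forall>c. Digamma (2 * a) - ln 2 < c \<and> c < c2 a \<longrightarrow> dominates a (deltaS a c) (delta c))
    \<and> (\<forall>c. c \<ge> c2 a \<longrightarrow> dominates a (deltaS a (c2 a)) (delta c))
    \<and> inadmissible a (delta (ln a)) \<and> dominates a (deltaS a (ln a)) (delta (ln a))
    \<and> inadmissible a (delta (ln (a + 1))) \<and> dominates a (deltaS a (ln (a + 1))) (delta (ln (a + 1)))"
proof -
  have "ln a < ln (a + 1)" using assms by simp
  then have ln_a: "dominates a (deltaS a (ln a)) (delta (ln a))"
    and ln_a1: "dominates a (deltaS a (ln (a + 1))) (delta (ln (a + 1)))"
    using ln_gt_Digamma_double_minus_ln2[OF assms] by (auto intro!: dominates_deltaS[OF assms])
  show ?thesis
    unfolding inadmissible_def c1_def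
    using dominates_delta_Digamma[OF assms] dominates_deltaS[OF assms] dominates_deltaS_c2[OF assms] ln_a ln_a1
    by blast
qed

end
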